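(* Let $X,Y$ be Banach spaces over $\mathbb{K}\in\{\mathbb{R},\mathbb{C}\}$, let $G\in L(X,Y)$ with $\|G\|=1$, and assume that $\|\cdot\|_G$ is a norm on $L(X,Y)$. Let $T\in L(X,Y)$ satisfy $\|T\|_G=1$. Let $\mathcal{W}(T)\subset L(X,Y)^*$ be the set of all weak*-limits of nets $(\psi_{x_\alpha,y_\alpha^*})$ where $(x_\alpha,y_\alpha^* )\subset S_X\times S_{Y^*}$ is a net with $\|Gx_\alpha\|\to1$ and $y_\alpha^*(Tx_\alpha)\to1$. The following are equivalent: (i) $T$ is a smooth point of the unit ball of $(L(X,Y),\|\cdot\|_G)$; (ii) $\mathcal{W}(T)=\{\varphi\}$ for a single functional $\varphi$ with $\varphi(T)=1$.
   Context: $S_X$ is the unit sphere of $X$, $Y^*$ the dual of $Y$. For $x\in X$, $y^*\in Y^*$, $\psi_{x,y^*}(S)=y^*(Sx)$ for $S\in L(X,Y)$. The $G$-norm is $\|T\|_G := \inf_{\delta>0}\sup\{\|Tx\|: x\in S_X,\ \|Gx\|>1-\delta\}$. $T$ with $\|T\|_G=1$ is a smooth point of the unit ball of $(L(X,Y),\|\cdot\|_G)$ if there is exactly one functional $f$ in the unit sphere of $(L(X,Y),\|\cdot\|_G)^*$ with $f(T)=1$. *)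

theory Defs
  imports "HOL-Analysis.Analysis"
begin

text \<open>Scalar field K is a real normed field (i.e. R or C up to isomorphism).
  A K-Banach space is a real Banach space 'a together with a K-scalar
  multiplication s extending scaleR, with norm (s c x) = norm c * norm x.\<close>

definition kspace :: "('k::real_normed_field \<Rightarrow> 'a::real_normed_vector \<Rightarrow> 'a) \<Rightarrow> bool" where
  "kspace s \<longleftrightarrow>
     (\<forall>a b x. s a (s b x) = s (a * b) x) \<and> (\<forall>x. s 1 x = x) \<and>
     (\<forall>a x y. s a (x + y) = s a x + s a y) \<and> (\<forall>a b x. s (a + b) x = s a x + s b x) \<and>
     (\<forall>r x. s (of_real r) x = scaleR r x) \<and> (\<forall>a x. norm (s a x) = norm a * norm x)"

definition klinear :: "('k \<Rightarrow> 'a \<Rightarrow> 'a) \<Rightarrow> ('k \<Rightarrow> 'b \<Rightarrow> 'b) \<Rightarrow> ('a::plus \<Rightarrow> 'b::plus) \<Rightarrow> bool" where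
  "klinear sX sY T \<longleftrightarrow> (\<forall>x y. T (x + y) = T x + T y) \<and> (\<forall>c x. T (sX c x) = sY c (T x))"

definition Lop :: "('k::real_normed_field \<Rightarrow> 'a::real_normed_vector \<Rightarrow> 'a) \<Rightarrow> ('k \<Rightarrow> 'b::real_normed_vector \<Rightarrow> 'b)
    \<Rightarrow> ('a \<Rightarrow> 'b) set" where
  "Lop sX sY = {T. klinear sX sY T \<and> (\<exists>K. \<forall>x. norm (T x) \<le> K * norm x)}"

definition kdual :: "('k::real_normed_field \<Rightarrow> 'b::real_normed_vector \<Rightarrow> 'b) \<Rightarrow> ('b \<Rightarrow> 'k) set" where
  "kdual sY = Lop sY (\<lambda>c z. c * z)"

definition gnorm :: "('a::real_normed_vector \<Rightarrow> 'b::real_normed_vector) \<Rightarrow> ('a \<Rightarrow> 'b) \<Rightarrow> real" where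
  "gnorm G T = Inf ((\<lambda>\<delta>. Sup ((\<lambda>x. norm (T x)) ` {x. norm x = 1 \<and> norm (G x) > 1 - \<delta>})) ` {0<..})"

definition norm_on_Lop :: "('k::real_normed_field \<Rightarrow> 'a::real_normed_vector \<Rightarrow> 'a) \<Rightarrow> ('k \<Rightarrow> 'b::real_normed_vector \<Rightarrow> 'b)
    \<Rightarrow> (('a \<Rightarrow> 'b) \<Rightarrow> real) \<Rightarrow> bool" where
  "norm_on_Lop sX sY N \<longleftrightarrow>
     (\<forall>S\<in>Lop sX sY. N S \<ge> 0 \<and> (N S = 0 \<longleftrightarrow> S = (\<lambda>x. 0))) \<and>
     (\<forall>S\<in>Lop sX sY. \<forall>c. N (\<lambda>x. sY c (S x)) = norm c * N S) \<and>
     (\<forall>S\<in>Lop sX sY. \<forall>R\<in>Lop sX sY. N (\<lambda>x. S x + R x) \<le> N S + N R)"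

text \<open>The dual of (L(X,Y), G-norm): bounded K-linear functionals, taken extensional
  (zero outside L(X,Y)) so that functionals are determined by their values on L(X,Y).\<close>
definition op_dual :: "('k::real_normed_field \<Rightarrow> 'a::real_normed_vector \<Rightarrow> 'a) \<Rightarrow> ('k \<Rightarrow> 'b::real_normed_vector \<Rightarrow> 'b)
    \<Rightarrow> ('a \<Rightarrow> 'b) \<Rightarrow> ((('a \<Rightarrow> 'b) \<Rightarrow> 'k) set)" where
  "op_dual sX sY G = {f.
     (\<forall>S\<in>Lop sX sY. \<forall>R\<in>Lop sX sY. f (\<lambda>x. S x + R x) = f S + f R) \<and>
     (\<forall>S\<in>Lop sX sY. \<forall>c. f (\<lambda>x. sY c (S x)) = c * f S) \<and>
     (\<exists>K. \<forall>S\<in>Lop sX sY. norm (f S) \<le> K * gnorm G S) \<and>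
     (\<forall>S. S \<notin> Lop sX sY \<longrightarrow> f S = 0)}"

definition op_dual_norm :: "('k::real_normed_field \<Rightarrow> 'a::real_normed_vector \<Rightarrow> 'a) \<Rightarrow> ('k \<Rightarrow> 'b::real_normed_vector \<Rightarrow> 'b)
    \<Rightarrow> ('a \<Rightarrow> 'b) \<Rightarrow> (('a \<Rightarrow> 'b) \<Rightarrow> 'k) \<Rightarrow> real" where
  "op_dual_norm sX sY G f = Sup ((\<lambda>S. norm (f S)) ` {S \<in> Lop sX sY. gnorm G S \<le> 1})"

definition smooth_point :: "('k::real_normed_field \<Rightarrow> 'a::real_normed_vector \<Rightarrow> 'a) \<Rightarrow> ('k \<Rightarrow> 'b::real_normed_vector \<Rightarrow> 'b)
    \<Rightarrow> ('a \<Rightarrow> 'b) \<Rightarrow> ('a \<Rightarrow> 'b) \<Rightarrow> bool" where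
  "smooth_point sX sY G T \<longleftrightarrow>
     (\<exists>!f. f \<in> op_dual sX sY G \<and> op_dual_norm sX sY G f = 1 \<and> f T = 1)"

text \<open>W(T): weak*-limits of nets psi_{x,y*}; a net (x_alpha, y*_alpha) is represented by the
  proper filter it induces on X \<times> Y*; weak* convergence is pointwise convergence on L(X,Y).\<close>
definition W_set :: "('k::real_normed_field \<Rightarrow> 'a::real_normed_vector \<Rightarrow> 'a) \<Rightarrow> ('k \<Rightarrow> 'b::real_normed_vector \<Rightarrow> 'b)
    \<Rightarrow> ('a \<Rightarrow> 'b) \<Rightarrow> ('a \<Rightarrow> 'b) \<Rightarrow> ((('a \<Rightarrow> 'b) \<Rightarrow> 'k) set)" where
  "W_set sX sY G T = {\<phi> \<in> op_dual sX sY G. \<exists>F :: ('a \<times> ('b \<Rightarrow> 'k)) filter.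
     F \<noteq> bot \<and>
     (\<forall>\<^sub>F p in F. norm (fst p) = 1 \<and> snd p \<in> kdual sY \<and> onorm (snd p) = 1) \<and>
     ((\<lambda>p. norm (G (fst p))) \<longlongrightarrow> 1) F \<and>
     ((\<lambda>p. snd p (T (fst p))) \<longlongrightarrow> 1) F \<and>
     (\<forall>S\<in>Lop sX sY. ((\<lambda>p. snd p (S (fst p))) \<longlongrightarrow> \<phi> S) F)}"

end

theory Submission
  imports Defs "HOL-Computational_Algebra.Fundamental_Theorem_Algebra"
begin

text \<open>
  Functionals \<open>f\<close> of norm one with \<open>f(T) = 1\<close> are exactly the supporting functionals of \<open>T\<close>,
  i.e. those with \<open>|f(S)| \<le> \<parallel>S\<parallel>\<^sub>G\<close> and \<open>f(T) = 1\<close>. Every element of \<open>\<W>(T)\<close> is one: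
  once \<open>\<parallel>Gx\<parallel>\<close> is close to \<open>1\<close>, \<open>|y\<^sup>*(Sx)| \<le> \<parallel>Sx\<parallel> \<le> \<parallel>S\<parallel>\<^sub>G + \<epsilon>\<close>. Conversely, for a supporting
  \<open>g\<close> and any \<open>S\<close>, norming \<open>(T + tS)x\<close> for small \<open>t\<close> and almost extremal \<open>x\<close> produces pairs with
  \<open>y\<^sup>*(Tx) \<rightarrow> 1\<close> and \<open>Re y\<^sup>*(Sx) \<ge> Re g(S) - \<epsilon>\<close>; by Tychonoff they have a weak* cluster point
  \<open>\<phi> \<in> \<W>(T)\<close> with \<open>Re \<phi>(S) \<ge> Re g(S)\<close>. So \<open>\<W>(T)\<close> is nonempty whenever \<open>T\<close> has a supporting functional, and if \<open>\<W>(T) = {\<phi>}\<close> then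
  \<open>Re g \<le> Re \<phi>\<close> for every supporting \<open>g\<close>, which forces \<open>g = \<phi>\<close>.

  Since the scalar field is an arbitrary real normed field, it is first shown to be \<open>\<real>\<close> or \<open>\<complex>\<close>
  (Ostrowski), which provides a real part, complexification of real functionals for the
  Hahn--Banach theorem, and compact balls for Tychonoff.
\<close>

section \<open>Every real normed field is \<open>\<real>\<close> or \<open>\<complex>\<close>\<close>

definition rpoly :: "real poly \<Rightarrow> 'a::{real_algebra_1,comm_ring_1} \<Rightarrow> 'a" where
  "rpoly p x = poly (map_poly of_real p) x"

lemma rpoly_0 [simp]: "rpoly 0 x = 0"
  by (simp add: rpoly_def)

lemma rpoly_pCons [simp]: "rpoly (pCons c p) x = of_real c + x * rpoly p x"
  by (simp add: rpoly_def map_poly_pCons)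

lemma rpoly_add [simp]: "rpoly (p + q) x = rpoly p x + rpoly q x"
proof (induction p arbitrary: q)
  case (pCons a p)
  show ?case
  proof (cases q rule: pCons_cases)
    case (pCons b q')
    then show ?thesis using pCons.IH[of q'] by (simp add: algebra_simps)
  qed
qed simp

lemma rpoly_smult [simp]: "rpoly (smult c p) x = of_real c * rpoly p x"
  by (induction p) (simp_all add: algebra_simps)

lemma rpoly_mult [simp]: "rpoly (p * q) x = rpoly p x * rpoly q x"
  by (induction p) (simp_all add: algebra_simps)

lemma rpoly_1 [simp]: "rpoly 1 x = 1"
  by (simp add: one_pCons)

lemma rpoly_of_real: "rpoly p (of_real x) = of_real (poly p x)"
  by (induction p) simp_all

lemma real_poly_linear_or_quadratic_factor:
  fixes p :: "real poly"
  assumes "degree p > 0"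
  shows "\<exists>d q. p = d * q \<and> ((\<exists>c. d = [:c, 1:]) \<or> (\<exists>s t. d = [:s, t, 1:]))"
proof -
  have "\<not> constant (poly (map_poly complex_of_real p))"
    using assms by (simp add: constant_degree degree_map_poly)
  then obtain z where "poly (map_poly complex_of_real p) z = 0"
    using fundamental_theorem_of_algebra by blast
  then have root: "rpoly p z = 0" by (simp add: rpoly_def)
  show ?thesis
  proof (cases "Im z = 0")
    case True
    then have "z = of_real (Re z)" by (simp add: complex_eq_iff)
    with root have "poly p (Re z) = 0" by (metis of_real_eq_0_iff rpoly_of_real)
    then obtain q where "p = [:- Re z, 1:] * q" by (auto simp: poly_eq_0_iff_dvd)
    then show ?thesis by blast
  next
    case False
    define d where "d = [:(cmod z)\<^sup>2, -2 * Re z, 1:]"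
    have "rpoly d z = 0"
      using cmod_power2[of z] by (simp add: d_def complex_eq_iff power2_eq_square algebra_simps)
    define r where "r = p mod d"
    have "degree r \<le> 1"
      using degree_mod_less[of d p] by (fastforce simp: d_def r_def)
    then have r: "r = [:coeff r 0, coeff r 1:]"
      by (intro poly_eqI) (auto simp: coeff_pCons split: nat.splits intro: coeff_eq_0)
    have p: "p = d * (p div d) + r" by (simp add: r_def)
    then have "rpoly r z = 0"
      using root \<open>rpoly d z = 0\<close> by (metis add_0 mult_zero_left rpoly_add rpoly_mult)
    then have "of_real (coeff r 0) + z * of_real (coeff r 1) = 0"
      by (subst (asm) r) simp
    then have "coeff r 0 + Re z * coeff r 1 = 0" and "Im z * coeff r 1 = 0"
      by (simp_all add: complex_eq_iff)
    with False have "coeff r 0 = 0" "coeff r 1 = 0" by simp_all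
    then have "r = 0" by (subst r) simp
    then have "p = d * (p div d)" using p by simp
    then show ?thesis unfolding d_def by blast
  qed
qed

text \<open>Factor \<open>P\<close> into real linear and quadratic factors.\<close>

lemma norm_rpoly_monic_lower_bound:
  fixes a :: "'k::real_normed_field"
  assumes r: "r \<ge> 0" and quad: "\<And>p s. r\<^sup>2 \<le> norm (a * a + of_real p * a + of_real s)"
  shows "lead_coeff P = 1 \<Longrightarrow> r ^ degree P \<le> norm (rpoly P a)"
proof (induction "degree P" arbitrary: P rule: less_induct)
  case less
  show ?case
  proof (cases "degree P = 0")
    case True
    with less.prems have "P = 1" by (metis degree_eq_zeroE lead_coeff_pCons(2) one_pCons)
    then show ?thesis by simp
  next
    case False
    then obtain d q where P: "P = d * q" and d: "(\<exists>c. d = [:c, 1:]) \<or> (\<exists>s t. d = [:s, t, 1:])"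
      using real_poly_linear_or_quadratic_factor by blast
    have "lead_coeff d = 1" "degree d > 0" using d by auto
    moreover have "d \<noteq> 0" "q \<noteq> 0" using P less.prems by auto
    ultimately have "lead_coeff q = 1" and deg: "degree P = degree d + degree q"
      using less.prems P by (simp only: lead_coeff_mult mult_1, simp add: degree_mult_eq)
    then have IH: "r ^ degree q \<le> norm (rpoly q a)"
      using less.hyps \<open>degree d > 0\<close> by simp
    have "r ^ degree d \<le> norm (rpoly d a)"
    proof (cases "\<exists>c. d = [:c, 1:]")
      case True
      then obtain c where dc: "d = [:c, 1:]" by blast
      have "(of_real c + a) * (of_real c + a) = a * a + of_real (2 * c) * a + of_real (c * c)"
        by (simp add: algebra_simps)
      then have "r\<^sup>2 \<le> norm (of_real c + a) ^ 2"
        using quad[of "2 * c" "c * c"] by (metis norm_mult power2_eq_square)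
      then have "r \<le> norm (of_real c + a)" by (rule power2_le_imp_le) simp
      then show ?thesis using dc by simp
    next
      case False
      then obtain s t where "d = [:s, t, 1:]" using d by blast
      then show ?thesis using quad[of t s] by (simp add: power2_eq_square algebra_simps)
    qed
    then have "r ^ degree d * r ^ degree q \<le> norm (rpoly d a) * norm (rpoly q a)"
      using IH r by (simp add: mult_mono)
    then show ?thesis using P deg by (simp add: power_add norm_mult)
  qed
qed

fun geom_cofactor :: "real poly \<Rightarrow> real \<Rightarrow> nat \<Rightarrow> real poly" where
  "geom_cofactor q e 0 = 1"
| "geom_cofactor q e (Suc n) = q * geom_cofactor q e n + [:(-e) ^ Suc n:]"

lemma geom_cofactor_monic:
  assumes "degree q = 2" "lead_coeff q = 1"
  shows "degree (geom_cofactor q e n) = 2 * n \<and> lead_coeff (geom_cofactor q e n) = 1"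
proof (induction n)
  case (Suc n)
  then have IH: "degree (geom_cofactor q e n) = 2 * n" "lead_coeff (geom_cofactor q e n) = 1"
    by blast+
  have "q \<noteq> 0" "geom_cofactor q e n \<noteq> 0" using assms IH by auto
  then have deg: "degree (q * geom_cofactor q e n) = 2 * Suc n"
    and lead: "lead_coeff (q * geom_cofactor q e n) = 1"
    using IH assms by (simp add: degree_mult_eq, simp only: lead_coeff_mult IH(2) assms(2) mult_1)
  then have lt: "degree [:(-e) ^ Suc n:] < degree (q * geom_cofactor q e n)" by simp
  show ?case
    using degree_add_eq_left[OF lt] lead_coeff_add_le[OF lt] deg lead by (simp add: add.commute)
qed simp

lemma rpoly_geom_cofactor:
  "(rpoly q x + of_real e) * rpoly (geom_cofactor q e n) x = rpoly q x ^ Suc n - of_real ((-e) ^ Suc n)"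
  by (induction n) (simp_all add: algebra_simps)

text \<open>The heart of Ostrowski's argument: at a minimum \<open>b\<close> of the monic real quadratics at \<open>a\<close>,
  \<open>b + m/2\<close> with \<open>m = \<parallel>b\<parallel>\<close> is again minimal, since \<open>(b + m/2) \<cdot> Q\<^sub>n(a) = b\<^sup>n\<^sup>+\<^sup>1 - (-m/2)\<^sup>n\<^sup>+\<^sup>1\<close>
  for a monic real polynomial \<open>Q\<^sub>n\<close> of degree \<open>2n\<close>, whose norm at \<open>a\<close> is at least \<open>m\<^sup>n\<close>.\<close>

lemma norm_add_half_min_le:
  fixes a b :: "'k::real_normed_field"
  assumes min: "\<And>p s. norm b \<le> norm (a * a + of_real p * a + of_real s)"
    and b: "b = a * a + of_real p0 * a + of_real s0" and pos: "norm b > 0"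
  shows "norm (b + of_real (norm b / 2)) \<le> norm b"
proof -
  define m where "m = norm b"
  define e where "e = m / 2"
  define q where "q = [:s0, p0, 1:]"
  have key: "norm (b + of_real e) * m ^ n \<le> m ^ Suc n + e ^ Suc n" for n
  proof -
    have "degree q = 2" "lead_coeff q = 1" by (simp_all add: q_def)
    then have Q: "degree (geom_cofactor q e n) = 2 * n" "lead_coeff (geom_cofactor q e n) = 1"
      using geom_cofactor_monic by blast+
    have "sqrt m ^ (2 * n) \<le> norm (rpoly (geom_cofactor q e n) a)"
      using norm_rpoly_monic_lower_bound[of "sqrt m" a, OF _ _ Q(2)] min Q(1) by (simp add: m_def)
    then have "m ^ n \<le> norm (rpoly (geom_cofactor q e n) a)"
      by (simp add: m_def power_mult)
    then have "norm (b + of_real e) * m ^ n \<le> norm ((b + of_real e) * rpoly (geom_cofactor q e n) a)"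
      by (simp add: norm_mult mult_left_mono)
    also have "\<dots> = norm (b ^ Suc n - of_real ((-e) ^ Suc n))"
      using rpoly_geom_cofactor[of q a e n] by (simp add: q_def b algebra_simps)
    also have "\<dots> \<le> norm (b ^ Suc n) + norm (of_real ((-e) ^ Suc n) :: 'k)"
      by (rule norm_triangle_ineq4)
    also have "\<dots> = m ^ Suc n + e ^ Suc n"
      using pos by (simp only: m_def e_def norm_power norm_of_real power_abs abs_minus_cancel)
    finally show ?thesis .
  qed
  show ?thesis
  proof (rule ccontr)
    define v where "v = norm (b + of_real e)"
    assume "\<not> ?thesis"
    then have "(v - m) / m > 0" using pos by (simp add: v_def e_def m_def)
    then obtain n where n: "(1/2) ^ n < (v - m) / m"
      using real_arch_pow_inv[of "(v - m) / m" "1/2"] by auto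
    have "m ^ n * v \<le> m ^ n * (m * (1 + (1/2) ^ Suc n))"
      using key[of n] by (simp add: v_def e_def power_divide algebra_simps)
    then have "v \<le> m * (1 + (1/2) ^ Suc n)" using pos by (simp add: m_def)
    also have "\<dots> \<le> m * (1 + (1/2) ^ n)" using pos by (simp add: m_def power_decreasing)
    also have "\<dots> < v" using n pos by (simp add: m_def field_simps)
    finally show False by simp
  qed
qed

lemma norm_real_combination_coercive:
  fixes a :: "'k::real_normed_field"
  assumes "a \<notin> range of_real"
  obtains c where "c > 0" "\<And>p s. c * norm (p, s) \<le> norm (of_real p * a + of_real s)"
proof -
  define \<psi> where "\<psi> = (\<lambda>z::real \<times> real. norm (of_real (fst z) * a + of_real (snd z)))"
  have "continuous_on (sphere 0 1) \<psi>" unfolding \<psi>_def by (intro continuous_intros)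
  then obtain z0 where z0: "norm z0 = 1" and z0min: "\<And>y. norm y = 1 \<Longrightarrow> \<psi> z0 \<le> \<psi> y"
    using continuous_attains_inf[of "sphere 0 1" \<psi>] by auto
  have "\<psi> z0 > 0"
  proof (rule ccontr)
    assume "\<not> \<psi> z0 > 0"
    then have e: "of_real (fst z0) * a = - of_real (snd z0)"
      unfolding \<psi>_def by (simp add: add_eq_0_iff)
    show False
    proof (cases "fst z0 = 0")
      case True
      with e have "z0 = 0" by (simp add: prod_eq_iff)
      with z0 show False by simp
    next
      case False
      then have "a = of_real (- snd z0 / fst z0)" using e by (simp add: field_simps)
      then show False using assms by (metis rangeI)
    qed
  qed
  moreover have "\<psi> z0 * norm z \<le> \<psi> z" for z
  proof (cases "z = 0")
    case False
    have "of_real (fst z) * a + of_real (snd z)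
        = (of_real (norm z) :: 'k) * (of_real (fst z / norm z) * a + of_real (snd z / norm z))"
      using False by (simp add: algebra_simps)
    then have "\<psi> z = norm z * \<psi> ((1 / norm z) *\<^sub>R z)"
      unfolding \<psi>_def by (simp add: norm_mult)
    moreover have "\<psi> z0 \<le> \<psi> ((1 / norm z) *\<^sub>R z)" using False by (intro z0min) simp
    ultimately show ?thesis by (metis mult.commute mult_left_mono norm_ge_zero)
  qed (simp add: \<psi>_def)
  ultimately show ?thesis using that[of "\<psi> z0"] unfolding \<psi>_def by force
qed

lemma monic_real_quadratic_norm_min:
  fixes a :: "'k::real_normed_field"
  assumes "a \<notin> range of_real"
  obtains p0 s0 where
    "\<And>p s. norm (a * a + of_real p0 * a + of_real s0) \<le> norm (a * a + of_real p * a + of_real s)"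
    "\<And>p s. norm (a * a + of_real p * a + of_real s) = norm (a * a + of_real p0 * a + of_real s0)
      \<Longrightarrow> s \<le> s0"
proof -
  define \<phi> where "\<phi> = (\<lambda>z::real \<times> real. norm (a * a + of_real (fst z) * a + of_real (snd z)))"
  have cont: "continuous_on A \<phi>" for A unfolding \<phi>_def by (intro continuous_intros)
  obtain c where c: "c > 0" "\<And>p s. c * norm (p, s) \<le> norm (of_real p * a + of_real s)"
    using norm_real_combination_coercive[OF assms] by blast
  define C where "C = {z. \<phi> z \<le> \<phi> 0}"
  have "norm z \<le> (\<phi> 0 + norm (a * a)) / c" if "z \<in> C" for z
  proof -
    have "c * norm z \<le> norm (of_real (fst z) * a + of_real (snd z))"
      using c(2)[of "fst z" "snd z"] by simp
    also have "\<dots> \<le> \<phi> z + norm (a * a)"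
      using norm_triangle_ineq4[of "a * a + of_real (fst z) * a + of_real (snd z)" "a * a"]
      by (simp add: \<phi>_def algebra_simps)
    finally show ?thesis using that c(1) by (simp add: C_def field_simps)
  qed
  then have "bounded C" unfolding bounded_iff by blast
  moreover have "closed C" unfolding C_def by (intro closed_Collect_le cont continuous_on_const)
  ultimately have "compact C" by (simp add: compact_eq_bounded_closed)
  moreover have "0 \<in> C" by (simp add: C_def)
  then have "C \<noteq> {}" by blast
  ultimately have "\<exists>z\<in>C. \<forall>y\<in>C. \<phi> z \<le> \<phi> y"
    using continuous_attains_inf cont by blast
  then obtain zm where zm: "zm \<in> C" "\<And>y. y \<in> C \<Longrightarrow> \<phi> zm \<le> \<phi> y" by blast
  have min: "\<phi> zm \<le> \<phi> y" for y
  proof (cases "y \<in> C")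
    case False
    then have "\<phi> 0 < \<phi> y" by (simp add: C_def)
    with zm(2)[OF \<open>0 \<in> C\<close>] show ?thesis by simp
  qed (rule zm(2))
  define M where "M = C \<inter> {z. \<phi> z = \<phi> zm}"
  have "closed {z. \<phi> z = \<phi> zm}" by (intro closed_Collect_eq cont continuous_on_const)
  with \<open>compact C\<close> have "compact M" unfolding M_def by (rule compact_Int_closed)
  moreover have "zm \<in> M" using \<open>zm \<in> C\<close> by (simp add: M_def)
  ultimately have "\<exists>z\<in>M. \<forall>y\<in>M. snd y \<le> snd z"
    by (intro continuous_attains_sup) (auto intro: continuous_on_snd continuous_on_id)
  then obtain z1 where z1: "z1 \<in> M" "\<And>y. y \<in> M \<Longrightarrow> snd y \<le> snd z1" by blast
  have "\<phi> z1 \<le> \<phi> (p, s)" for p s using z1(1) min by (simp add: M_def)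
  moreover have "s \<le> snd z1" if "\<phi> (p, s) = \<phi> z1" for p s
    using that z1 min[of 0] by (force simp: M_def C_def)
  ultimately show ?thesis using that[of "fst z1" "snd z1"] by (simp add: \<phi>_def)
qed

lemma non_real_quadratic_root:
  fixes a :: "'k::real_normed_field"
  assumes "a \<notin> range of_real"
  shows "\<exists>p s. a * a + of_real p * a + of_real s = 0"
proof (rule ccontr)
  assume no_root: "\<not> ?thesis"
  obtain p0 s0 where min: "\<And>p s. norm (a * a + of_real p0 * a + of_real s0) \<le> norm (a * a + of_real p * a + of_real s)"
    and tie: "\<And>p s. norm (a * a + of_real p * a + of_real s) = norm (a * a + of_real p0 * a + of_real s0)
      \<Longrightarrow> s \<le> s0"
    using monic_real_quadratic_norm_min[OF assms] by blast
  define b where "b = a * a + of_real p0 * a + of_real s0"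
  have pos: "norm b > 0" using no_root by (auto simp: b_def)
  have shift: "b + of_real (norm b / 2) = a * a + of_real p0 * a + of_real (s0 + norm b / 2)"
    by (simp add: b_def)
  have "norm (b + of_real (norm b / 2)) \<le> norm b"
    using norm_add_half_min_le[OF min[folded b_def] b_def pos] .
  moreover have "norm b \<le> norm (b + of_real (norm b / 2))"
    unfolding shift by (rule min[folded b_def])
  ultimately have "norm (a * a + of_real p0 * a + of_real (s0 + norm b / 2)) = norm b"
    unfolding shift by linarith
  then have "s0 + norm b / 2 \<le> s0"
    by (intro tie[of p0]) (simp add: b_def)
  with pos show False by simp
qed

lemma non_real_imaginary_unit:
  fixes a :: "'k::real_normed_field"
  assumes na: "a \<notin> range of_real"
  shows "\<exists>J u v. J * J = -1 \<and> a = of_real u + of_real v * J"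
proof -
  obtain p s where ps: "a * a + of_real p * a + of_real s = 0"
    using non_real_quadratic_root[OF na] by blast
  define D where "D = 4 * s - p * p"
  define w where "w = 2 * a + of_real p"
  have "w * w = 4 * (a * a + of_real p * a + of_real s) + of_real (p * p - 4 * s)"
    by (simp add: w_def algebra_simps)
  then have ww: "w * w = of_real (- D)" using ps by (simp add: D_def)
  show ?thesis
  proof (cases "D > 0")
    case False
    define t where "t = sqrt (- D)"
    have "w * w = of_real t * of_real t" using ww False
      by (simp add: t_def of_real_mult[symmetric] del: of_real_mult)
    then have "(w - of_real t) * (w + of_real t) = 0" by (simp add: algebra_simps)
    then have "w = of_real t \<or> w = - of_real t" by (auto simp: eq_neg_iff_add_eq_0)
    then have "a = of_real ((t - p) / 2) \<or> a = of_real ((- t - p) / 2)"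
      by (auto simp: w_def field_simps)
    with na show ?thesis by (metis rangeI)
  next
    case True
    define t where "t = sqrt D"
    have t: "t > 0" "t * t = D" using True by (simp_all add: t_def)
    define J where "J = w / of_real t"
    have "J * J = w * w / (of_real t * of_real t)" by (simp add: J_def)
    also have "\<dots> = -1" using ww t True by (simp add: of_real_mult[symmetric] del: of_real_mult)
    finally have "J * J = -1" .
    moreover have "a = of_real (- p / 2) + of_real (t / 2) * J"
      using t by (simp add: J_def w_def field_simps)
    ultimately show ?thesis by blast
  qed
qed

lemma real_normed_field_real_or_complex:
  "(\<forall>k::'k::real_normed_field. k \<in> range of_real) \<or>
   (\<exists>J::'k. J * J = -1 \<and> (\<forall>k. \<exists>u v. k = of_real u + of_real v * J))"
proof (cases "\<forall>k::'k. k \<in> range of_real")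
  case False
  then obtain J :: 'k where JJ: "J * J = -1"
    using non_real_imaginary_unit by blast
  have "\<exists>u v. k = of_real u + of_real v * J" for k
  proof (cases "k \<in> range of_real")
    case True
    then show ?thesis by (metis add_0_right mult_zero_left of_real_0 rangeE)
  next
    case False
    then obtain J' u v where J': "J' * J' = -1" and k: "k = of_real u + of_real v * J'"
      using non_real_imaginary_unit[of k] by blast
    have "(J' - J) * (J' + J) = 0" using JJ J' by (simp add: algebra_simps)
    then have "J' = J \<or> J' = - J" by (auto simp: eq_neg_iff_add_eq_0)
    then show ?thesis
    proof
      assume "J' = - J"
      then have "k = of_real u + of_real (- v) * J" using k by simp
      then show ?thesis by blast
    qed (use k in blast)
  qed
  with JJ show ?thesis by blast
qed simp

definition complex_embed :: "'k::real_normed_field \<Rightarrow> complex \<Rightarrow> 'k" where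
  "complex_embed J z = of_real (Re z) + of_real (Im z) * J"

lemma complex_embed_mult:
  assumes "J * J = -1"
  shows "complex_embed J (z * w) = complex_embed J z * complex_embed J w"
proof -
  have "complex_embed J z * complex_embed J w = of_real (Re z * Re w)
      + of_real (Re z * Im w + Im z * Re w) * J + of_real (Im z * Im w) * (J * J)"
    by (simp add: complex_embed_def algebra_simps)
  with assms show ?thesis by (simp add: complex_embed_def algebra_simps)
qed

lemma complex_embed_add: "complex_embed J (z + w) = complex_embed J z + complex_embed J w"
  and complex_embed_diff: "complex_embed J (z - w) = complex_embed J z - complex_embed J w"
  and complex_embed_of_real: "complex_embed J (of_real r) = of_real r"
  and complex_embed_one: "complex_embed J 1 = 1"
  and complex_embed_imaginary_unit: "complex_embed J \<i> = J"
  by (simp_all add: complex_embed_def algebra_simps)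

text \<open>The crude bound \<open>\<parallel>\<iota> z\<parallel> \<le> 2 |z|\<close> of the multiplicative map \<open>\<iota>\<close> improves to
  \<open>\<parallel>\<iota> z\<parallel> \<le> |z|\<close> by applying it to powers of \<open>z\<close>, and to equality by applying it to \<open>1/z\<close>.\<close>

lemma norm_complex_embed:
  assumes JJ: "J * J = -1"
  shows "norm (complex_embed J z) = cmod z"
proof -
  have mult: "complex_embed J (z * w) = complex_embed J z * complex_embed J w" for z w
    using complex_embed_mult[OF JJ] .
  have "(norm J)\<^sup>2 = 1" using JJ by (metis norm_minus_cancel norm_mult norm_one power2_eq_square)
  then have "norm J = 1" using norm_ge_zero[of J] by (auto simp: power2_eq_1_iff)
  then have crude: "norm (complex_embed J z) \<le> 2 * cmod z" for z
    using norm_triangle_ineq[of "of_real (Re z)" "of_real (Im z) * J"] abs_Re_le_cmod[of z] abs_Im_le_cmod[of z]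
    by (simp add: complex_embed_def norm_mult)
  have le: "norm (complex_embed J z) \<le> cmod z" for z
  proof (rule ccontr)
    assume A: "\<not> ?thesis"
    then have "z \<noteq> 0" by (auto simp: complex_embed_def)
    define \<rho> where "\<rho> = norm (complex_embed J z) / cmod z"
    have "\<rho> > 1" using A \<open>z \<noteq> 0\<close> by (simp add: \<rho>_def)
    then obtain n where n: "2 < \<rho> ^ n" using real_arch_pow by blast
    have "complex_embed J (z ^ n) = complex_embed J z ^ n"
      by (induction n) (simp_all add: complex_embed_one mult)
    then have "norm (complex_embed J z) ^ n \<le> 2 * cmod z ^ n"
      using crude[of "z ^ n"] by (simp add: norm_power)
    then have "\<rho> ^ n \<le> 2" using \<open>z \<noteq> 0\<close> by (simp add: \<rho>_def power_divide divide_le_eq)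
    with n show False by simp
  qed
  show ?thesis
  proof (cases "z = 0")
    case False
    have "complex_embed J z * complex_embed J (1 / z) = 1"
      using False by (simp add: mult[symmetric] complex_embed_one)
    then have "norm (complex_embed J z) * norm (complex_embed J (1 / z)) = 1"
      by (metis norm_mult norm_one)
    moreover have "norm (complex_embed J (1 / z)) \<le> 1 / cmod z"
      using le[of "1 / z"] by (simp add: norm_divide)
    ultimately have "1 \<le> norm (complex_embed J z) * (1 / cmod z)"
      by (metis mult_left_mono norm_ge_zero)
    then have "cmod z \<le> norm (complex_embed J z)" using False by (simp add: field_simps)
    with le[of z] show ?thesis by simp
  qed (simp add: complex_embed_def)
qed

text \<open>\<open>re\<close> is the real part of \<open>\<real>\<close> or \<open>\<complex>\<close> (up to isomorphism), and \<open>J\<close> is \<open>0\<close> or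
  an imaginary unit accordingly.\<close>

definition is_real_part :: "'k::real_normed_field \<Rightarrow> ('k \<Rightarrow> real) \<Rightarrow> bool" where
  "is_real_part J re \<longleftrightarrow> (J = 0 \<or> J * J = -1) \<and> re J = 0 \<and> (\<forall>r. re (of_real r) = r) \<and>
    (\<forall>x y. re (x + y) = re x + re y) \<and> (\<forall>r x. re (of_real r * x) = r * re x) \<and>
    (\<forall>x. of_real (re x) - J * of_real (re (J * x)) = x) \<and>
    (\<forall>x. (norm x)\<^sup>2 = (re x)\<^sup>2 + (re (J * x))\<^sup>2)"

lemma is_real_part_real:
  assumes real: "\<And>k::'k::real_normed_field. k \<in> range of_real"
  shows "\<exists>re. is_real_part (0::'k) re"
proof -
  define re :: "'k \<Rightarrow> real" where "re = (\<lambda>x. SOME r. x = of_real r)"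
  have re: "x = of_real (re x)" for x
    using real unfolding re_def by (metis (mono_tags) rangeE someI)
  have re_of_real: "re (of_real r) = r" for r
    using re[of "of_real r"] by (metis of_real_eq_iff)
  have "is_real_part 0 re"
    unfolding is_real_part_def
  proof (intro conjI allI)
    show "re (x + y) = re x + re y" for x y
    proof -
      have "x + y = of_real (re x + re y)" using re[of x] re[of y] by simp
      then show ?thesis using re_of_real by metis
    qed
    show "re (of_real r * x) = r * re x" for r x
    proof -
      have "of_real r * x = of_real (r * re x)" using re[of x] by simp
      then show ?thesis using re_of_real by metis
    qed
    show "of_real (re x) - 0 * of_real (re (0 * x)) = x" for x
      using re[of x, symmetric] by simp
    show "(norm x)\<^sup>2 = (re x)\<^sup>2 + (re (0 * x))\<^sup>2" for x
    proof -
      have "norm x = \<bar>re x\<bar>" using re[of x] by (metis norm_of_real)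
      then show ?thesis using re_of_real[of 0] by simp
    qed
  qed (simp_all add: re_of_real re_of_real[of 0, simplified])
  then show ?thesis by blast
qed

lemma is_real_part_complex:
  fixes J :: "'k::real_normed_field"
  assumes JJ: "J * J = -1" and span: "\<And>k. \<exists>u v. k = of_real u + of_real v * J"
  shows "\<exists>re. is_real_part J re"
proof -
  have "bij (complex_embed J)"
  proof (rule bijI)
    show "inj (complex_embed J)"
      using norm_complex_embed[OF JJ] by (intro injI) (metis complex_embed_diff eq_iff_diff_eq_0 norm_eq_zero)
    show "surj (complex_embed J)"
      using span unfolding surj_def complex_embed_def by (metis complex.sel)
  qed
  then have surj: "\<exists>z. x = complex_embed J z" for x
    by (metis bij_pointE)
  define re where "re x = Re (inv (complex_embed J) x)" for x
  have re: "re (complex_embed J z) = Re z" for z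
    using \<open>bij (complex_embed J)\<close> by (simp add: re_def bij_is_inj)
  have re_J_mult: "re (J * complex_embed J z) = - Im z" for z
    using re[of "\<i> * z"] by (simp add: complex_embed_mult[OF JJ] complex_embed_imaginary_unit)
  have "is_real_part J re"
    unfolding is_real_part_def
  proof (intro conjI allI)
    show "J = 0 \<or> J * J = -1" using JJ by simp
    show "re J = 0" using re[of \<i>] by (simp add: complex_embed_imaginary_unit)
    show "re (of_real r) = r" for r using re[of "of_real r"] by (simp add: complex_embed_of_real)
    show "re (x + y) = re x + re y" for x y
    proof -
      obtain z w where "x = complex_embed J z" "y = complex_embed J w" using surj by blast
      then show ?thesis by (simp add: re flip: complex_embed_add)
    qed
    show "re (of_real r * x) = r * re x" for r x
    proof -
      obtain z where "x = complex_embed J z" using surj by blast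
      moreover have "of_real r * complex_embed J z = complex_embed J (of_real r * z)"
        by (simp add: complex_embed_mult[OF JJ] complex_embed_of_real)
      ultimately show ?thesis by (simp add: re)
    qed
    show "of_real (re x) - J * of_real (re (J * x)) = x" for x
    proof -
      obtain z where "x = complex_embed J z" using surj by blast
      then show ?thesis by (simp add: re re_J_mult) (simp add: complex_embed_def algebra_simps)
    qed
    show "(norm x)\<^sup>2 = (re x)\<^sup>2 + (re (J * x))\<^sup>2" for x
    proof -
      obtain z where "x = complex_embed J z" using surj by blast
      then show ?thesis by (simp add: re re_J_mult norm_complex_embed[OF JJ] cmod_power2)
    qed
  qed
  then show ?thesis by blast
qed

lemma is_real_part_exists: "\<exists>(J::'k::real_normed_field) re. is_real_part J re"
  using real_normed_field_real_or_complex is_real_part_real is_real_part_complex by metis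

definition imag_unit :: "'k::real_normed_field" where
  "imag_unit = fst (SOME (J, re). is_real_part J re)"

definition re_part :: "'k::real_normed_field \<Rightarrow> real" where
  "re_part = snd (SOME (J, re). is_real_part J re)"

lemma is_real_part_re_part: "is_real_part imag_unit re_part"
proof -
  have "\<exists>p. case p of (J :: 'a, re) \<Rightarrow> is_real_part J re"
    using is_real_part_exists by auto
  then have "case SOME p. case p of (J :: 'a, re) \<Rightarrow> is_real_part J re of (J, re) \<Rightarrow> is_real_part J re"
    by (rule someI_ex)
  then show ?thesis by (simp add: imag_unit_def re_part_def split: prod.splits)
qed

lemma imag_unit_cases: "imag_unit = (0::'k::real_normed_field) \<or> imag_unit * imag_unit = (-1::'k)"
  using is_real_part_re_part unfolding is_real_part_def by blast

lemma re_part_imag_unit [simp]: "re_part imag_unit = 0"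
  and re_part_of_real [simp]: "re_part (of_real r) = r"
  and re_part_add [simp]: "re_part (x + y) = re_part x + re_part y"
  and re_part_of_real_mult [simp]: "re_part (of_real r * x) = r * re_part x"
  and re_part_decomp: "of_real (re_part x) - imag_unit * of_real (re_part (imag_unit * x)) = x"
  and norm_power2_re_part: "(norm x)\<^sup>2 = (re_part x)\<^sup>2 + (re_part (imag_unit * x))\<^sup>2"
  by (simp_all add: is_real_part_re_part[unfolded is_real_part_def])



lemma re_part_0 [simp]: "re_part 0 = 0"
  using re_part_of_real[of 0] by simp

lemma re_part_1 [simp]: "re_part 1 = 1"
  using re_part_of_real[of 1] by simp

lemma re_part_minus [simp]: "re_part (- x) = - re_part x"
  using re_part_add[of x "- x"] by simp

lemma re_part_diff [simp]: "re_part (x - y) = re_part x - re_part y"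
  using re_part_add[of x "- y"] by simp

lemma re_part_mult_of_real [simp]: "re_part (x * of_real r) = r * re_part x"
  by (metis mult.commute re_part_of_real_mult)

lemma abs_re_part_le: "\<bar>re_part x\<bar> \<le> norm x"
proof -
  have "\<bar>re_part x\<bar>\<^sup>2 \<le> (norm x)\<^sup>2" using norm_power2_re_part[of x] by simp
  then show ?thesis using power2_le_imp_le[of "\<bar>re_part x\<bar>" "norm x"] by simp
qed

lemma abs_re_part_imag_unit_le: "\<bar>re_part (imag_unit * x)\<bar> \<le> norm x"
proof -
  have "\<bar>re_part (imag_unit * x)\<bar>\<^sup>2 \<le> (norm x)\<^sup>2" using norm_power2_re_part[of x] by simp
  then show ?thesis using power2_le_imp_le[of "\<bar>re_part (imag_unit * x)\<bar>" "norm x"] by simp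
qed


lemma bounded_linear_re_part: "bounded_linear re_part"
proof (rule bounded_linear_intro[of _ 1])
  show "re_part (x + y) = re_part x + re_part y" for x y :: 'a by simp
  show "re_part (r *\<^sub>R x) = r *\<^sub>R re_part x" for r and x :: 'a by (simp add: scaleR_conv_of_real)
  show "norm (re_part x) \<le> norm x * 1" for x :: 'a using abs_re_part_le[of x] by simp
qed

lemma power2_norm_diff_one: "(norm (x - 1))\<^sup>2 = (norm x)\<^sup>2 - 2 * re_part x + 1"
proof -
  have "re_part (imag_unit * (x - 1)) = re_part (imag_unit * x)"
    by (simp add: right_diff_distrib)
  then show ?thesis
    using norm_power2_re_part[of "x - 1"] norm_power2_re_part[of x]
    by (simp add: power2_eq_square algebra_simps)
qed

lemma re_part_eq_norm_imp:
  assumes "re_part x = norm x"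
  shows "x = of_real (norm x)"
proof -
  have "re_part (imag_unit * x) = 0" using assms norm_power2_re_part[of x] by simp
  then show ?thesis using re_part_decomp[of x] assms by simp
qed

lemma compact_cball_field: "compact (cball (0::'k::real_normed_field) r)"
proof -
  define f where "f = (\<lambda>z::real \<times> real. (of_real (fst z) :: 'k) - imag_unit * of_real (snd z))"
  have "continuous_on UNIV f" unfolding f_def by (intro continuous_intros)
  then have image: "compact (f ` ({-r..r} \<times> {-r..r}))"
    by (intro compact_continuous_image compact_Times compact_Icc) (auto intro: continuous_on_subset)
  have "cball 0 r \<subseteq> f ` ({-r..r} \<times> {-r..r})"
  proof
    fix x :: 'k
    assume "x \<in> cball 0 r"
    then have "(re_part x, re_part (imag_unit * x)) \<in> {-r..r} \<times> {-r..r}"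
      using abs_re_part_le[of x] abs_re_part_imag_unit_le[of x] by auto
    moreover have "x = f (re_part x, re_part (imag_unit * x))"
      using re_part_decomp[of x] by (simp add: f_def)
    ultimately show "x \<in> f ` ({-r..r} \<times> {-r..r})" by blast
  qed
  then have "cball 0 r = f ` ({-r..r} \<times> {-r..r}) \<inter> cball 0 r" by blast
  then show ?thesis using compact_Int_closed[OF image closed_cball, of 0 r] by metis
qed

section \<open>A norming functional by the Hahn--Banach theorem\<close>

text \<open>Graphs of real-linear functionals on subspaces, bounded by the norm and norming \<open>y0\<close>.\<close>

definition dominated_graph :: "'b::real_normed_vector \<Rightarrow> ('b \<times> real) set \<Rightarrow> bool" where
  "dominated_graph y0 H \<longleftrightarrow> (y0, norm y0) \<in> H \<and>
     (\<forall>x a y b. (x, a) \<in> H \<longrightarrow> (y, b) \<in> H \<longrightarrow> (x + y, a + b) \<in> H) \<and>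
     (\<forall>x a r. (x, a) \<in> H \<longrightarrow> (r *\<^sub>R x, r * a) \<in> H) \<and>
     (\<forall>x a b. (x, a) \<in> H \<longrightarrow> (x, b) \<in> H \<longrightarrow> a = b) \<and>
     (\<forall>x a. (x, a) \<in> H \<longrightarrow> a \<le> norm x)"

context
  fixes y0 :: "'b::real_normed_vector" and H :: "('b \<times> real) set"
  assumes H: "dominated_graph y0 H"
begin

lemma dominated_graph_base: "(y0, norm y0) \<in> H"
  and dominated_graph_add: "(x, a) \<in> H \<Longrightarrow> (y, b) \<in> H \<Longrightarrow> (x + y, a + b) \<in> H"
  and dominated_graph_scaleR: "(x, a) \<in> H \<Longrightarrow> (r *\<^sub>R x, r * a) \<in> H"
  and dominated_graph_unique: "(x, a) \<in> H \<Longrightarrow> (x, b) \<in> H \<Longrightarrow> a = b"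
  and dominated_graph_le_norm: "(x, a) \<in> H \<Longrightarrow> a \<le> norm x"
  using H by (simp_all add: dominated_graph_def)

lemma dominated_graph_extension_value:
  "\<exists>w. (\<forall>x a. (x, a) \<in> H \<longrightarrow> a - norm (x - z) \<le> w) \<and> (\<forall>y b. (y, b) \<in> H \<longrightarrow> w \<le> norm (y + z) - b)"
proof -
  define L where "L = {a - norm (x - z) | x a. (x, a) \<in> H}"
  have key: "a - norm (x - z) \<le> norm (y + z) - b" if "(x, a) \<in> H" "(y, b) \<in> H" for x a y b
  proof -
    have "a + b \<le> norm (x + y)" using dominated_graph_le_norm[OF dominated_graph_add[OF that]] .
    also have "\<dots> \<le> norm (x - z) + norm (y + z)"
      using norm_triangle_ineq[of "x - z" "y + z"] by simp
    finally show ?thesis by simp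
  qed
  have "L \<noteq> {}" using dominated_graph_base by (auto simp: L_def)
  moreover have "bdd_above L"
    unfolding L_def bdd_above_def using key[OF _ dominated_graph_base] by blast
  ultimately show ?thesis
    using key by (intro exI[of _ "Sup L"]) (auto intro!: cSup_upper cSup_least simp: L_def)
qed

lemma dominated_graph_extension_le_norm:
  assumes lo: "\<And>x a. (x, a) \<in> H \<Longrightarrow> a - norm (x - z) \<le> w"
    and up: "\<And>y b. (y, b) \<in> H \<Longrightarrow> w \<le> norm (y + z) - b"
    and "(x, a) \<in> H"
  shows "a + t * w \<le> norm (x + t *\<^sub>R z)"
proof (cases t "0::real" rule: linorder_cases)
  case greater
  have "w \<le> norm ((1 / t) *\<^sub>R x + z) - (1 / t) * a"
    by (rule up[OF dominated_graph_scaleR[OF assms(3)]])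
  then have "t * w \<le> t * (norm ((1 / t) *\<^sub>R x + z) - (1 / t) * a)"
    using greater by (intro mult_left_mono) auto
  also have "\<dots> = norm (t *\<^sub>R ((1 / t) *\<^sub>R x + z)) - a"
    using greater by (simp add: right_diff_distrib)
  also have "t *\<^sub>R ((1 / t) *\<^sub>R x + z) = x + t *\<^sub>R z"
    using greater by (simp add: scaleR_add_right)
  finally show ?thesis by simp
next
  case less
  define s where "s = - t"
  have "s > 0" using less by (simp add: s_def)
  have "(1 / s) * a - norm ((1 / s) *\<^sub>R x - z) \<le> w"
    by (rule lo[OF dominated_graph_scaleR[OF assms(3)]])
  then have "s * ((1 / s) * a - norm ((1 / s) *\<^sub>R x - z)) \<le> s * w"
    using \<open>s > 0\<close> by (intro mult_left_mono) auto
  then have "a - norm (s *\<^sub>R ((1 / s) *\<^sub>R x - z)) \<le> s * w"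
    using \<open>s > 0\<close> by (simp add: right_diff_distrib)
  also have "s *\<^sub>R ((1 / s) *\<^sub>R x - z) = x + t *\<^sub>R z"
    using \<open>s > 0\<close> by (simp add: s_def scaleR_diff_right)
  finally show ?thesis by (simp add: s_def)
qed (use assms(3) dominated_graph_le_norm in simp)

lemma dominated_graph_extension_unique:
  assumes z: "\<nexists>a. (z, a) \<in> H" and "(x1, a1) \<in> H" "(x2, a2) \<in> H"
    and eq: "x1 + t1 *\<^sub>R z = x2 + t2 *\<^sub>R z"
  shows "t1 = t2"
proof (rule ccontr)
  assume "t1 \<noteq> t2"
  have "(x2 - x1, a2 - a1) \<in> H"
    using dominated_graph_add[OF assms(3) dominated_graph_scaleR[OF assms(2), of "-1"]] by simp
  then have "((1 / (t1 - t2)) *\<^sub>R (x2 - x1), (1 / (t1 - t2)) * (a2 - a1)) \<in> H"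
    by (rule dominated_graph_scaleR)
  moreover have "(t1 - t2) *\<^sub>R z = x2 - x1"
    using eq by (simp add: algebra_simps)
  then have "(1 / (t1 - t2)) *\<^sub>R (x2 - x1) = z"
    using \<open>t1 \<noteq> t2\<close> by (metis divide_inverse_commute divide_self_if eq_iff_diff_eq_0
      mult.right_neutral scaleR_one scaleR_scaleR)
  ultimately show False using z by auto
qed

lemma dominated_graph_extend:
  assumes z: "\<nexists>a. (z, a) \<in> H"
  shows "\<exists>H'. dominated_graph y0 H' \<and> H \<subset> H'"
proof -
  obtain w where lo: "\<And>x a. (x, a) \<in> H \<Longrightarrow> a - norm (x - z) \<le> w"
    and up: "\<And>y b. (y, b) \<in> H \<Longrightarrow> w \<le> norm (y + z) - b"
    using dominated_graph_extension_value by blast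
  define H' where "H' = {(x + t *\<^sub>R z, a + t * w) | x a t. (x, a) \<in> H}"
  have inH': "(x, a) \<in> H \<Longrightarrow> (x + t *\<^sub>R z, a + t * w) \<in> H'" for x a t
    unfolding H'_def by blast
  have "dominated_graph y0 H'"
    unfolding dominated_graph_def
  proof (intro conjI allI impI)
    show "(y0, norm y0) \<in> H'" using inH'[OF dominated_graph_base, of 0] by simp
    show "(x + y, a + b) \<in> H'" if P: "(x, a) \<in> H'" "(y, b) \<in> H'" for x a y b
    proof -
      obtain x1 a1 t1 x2 a2 t2 where "x = x1 + t1 *\<^sub>R z" "a = a1 + t1 * w" "(x1, a1) \<in> H"
        "y = x2 + t2 *\<^sub>R z" "b = a2 + t2 * w" "(x2, a2) \<in> H"
        using P unfolding H'_def by blast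
      with inH'[OF dominated_graph_add, of x1 a1 x2 a2 "t1 + t2"] show ?thesis
        by (simp add: algebra_simps)
    qed
    show "(r *\<^sub>R x, r * a) \<in> H'" if P: "(x, a) \<in> H'" for x a r
    proof -
      obtain x1 a1 t1 where "x = x1 + t1 *\<^sub>R z" "a = a1 + t1 * w" "(x1, a1) \<in> H"
        using P unfolding H'_def by blast
      with inH'[OF dominated_graph_scaleR, of x1 a1 r "r * t1"] show ?thesis
        by (simp add: algebra_simps)
    qed
    show "a = b" if P: "(x, a) \<in> H'" "(x, b) \<in> H'" for x a b
    proof -
      obtain x1 a1 t1 x2 a2 t2 where e: "x = x1 + t1 *\<^sub>R z" "a = a1 + t1 * w" "(x1, a1) \<in> H"
        "x = x2 + t2 *\<^sub>R z" "b = a2 + t2 * w" "(x2, a2) \<in> H"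
        using P unfolding H'_def by blast
      then have "t1 = t2" using dominated_graph_extension_unique[OF z] by metis
      with e dominated_graph_unique show ?thesis by auto
    qed
    show "a \<le> norm x" if "(x, a) \<in> H'" for x a
      using that dominated_graph_extension_le_norm[OF lo up] unfolding H'_def by blast
  qed
  moreover have "H \<subseteq> H'" using inH'[of _ _ 0] by auto
  moreover have "(z, w) \<in> H'" using inH'[OF dominated_graph_scaleR[OF dominated_graph_base], of 0 1] by simp
  ultimately show ?thesis using z by blast
qed

end

lemma dominated_graph_span: "dominated_graph y0 {(r *\<^sub>R y0, r * norm y0) | r. True}"
  unfolding dominated_graph_def
proof (intro conjI allI impI)
  show "(y0, norm y0) \<in> {(r *\<^sub>R y0, r * norm y0) | r. True}"
    by (rule CollectI, rule exI[of _ 1]) simp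
  show "(x + y, a + b) \<in> {(r *\<^sub>R y0, r * norm y0) | r. True}"
    if P: "(x, a) \<in> {(r *\<^sub>R y0, r * norm y0) | r. True}" "(y, b) \<in> {(r *\<^sub>R y0, r * norm y0) | r. True}"
    for x a y b
  proof -
    obtain r1 r2 where "x = r1 *\<^sub>R y0" "a = r1 * norm y0" "y = r2 *\<^sub>R y0" "b = r2 * norm y0"
      using P by blast
    then show ?thesis by (intro CollectI exI[of _ "r1 + r2"]) (simp add: algebra_simps)
  qed
  show "(r *\<^sub>R x, r * a) \<in> {(r *\<^sub>R y0, r * norm y0) | r. True}"
    if P: "(x, a) \<in> {(r *\<^sub>R y0, r * norm y0) | r. True}" for x a r
  proof -
    obtain r1 where "x = r1 *\<^sub>R y0" "a = r1 * norm y0" using P by blast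
    then show ?thesis by (intro CollectI exI[of _ "r * r1"]) simp
  qed
  show "a = b"
    if "(x, a) \<in> {(r *\<^sub>R y0, r * norm y0) | r. True}" "(x, b) \<in> {(r *\<^sub>R y0, r * norm y0) | r. True}"
    for x a b
    using that by (cases "y0 = 0") (auto dest: scaleR_cancel_right[THEN iffD1])
  show "a \<le> norm x" if "(x, a) \<in> {(r *\<^sub>R y0, r * norm y0) | r. True}" for x a
    using that by (auto simp: mult_right_mono)
qed

lemma dominated_graph_Union_chain:
  assumes C: "C \<in> chains {H. dominated_graph y0 H}" and "C \<noteq> {}"
  shows "dominated_graph y0 (\<Union>C)"
proof -
  have dom: "\<And>H. H \<in> C \<Longrightarrow> dominated_graph y0 H" using C by (auto simp: chains_def)
  have pair: "\<exists>H\<in>C. p \<in> H \<and> q \<in> H" if "p \<in> \<Union>C" "q \<in> \<Union>C" for p q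
    using that chainsD[OF C] by blast
  show ?thesis
    unfolding dominated_graph_def
  proof (intro conjI allI impI)
    show "(y0, norm y0) \<in> \<Union>C"
      using \<open>C \<noteq> {}\<close> dom dominated_graph_base by blast
    show "(x + y, a + b) \<in> \<Union>C" if P: "(x, a) \<in> \<Union>C" "(y, b) \<in> \<Union>C" for x a y b
    proof -
      obtain H where "H \<in> C" "(x, a) \<in> H" "(y, b) \<in> H" using pair[OF P] by blast
      then show ?thesis using dominated_graph_add[OF dom] by blast
    qed
    show "(r *\<^sub>R x, r * a) \<in> \<Union>C" if "(x, a) \<in> \<Union>C" for x a r
      using that dominated_graph_scaleR[OF dom] by blast
    show "a = b" if P: "(x, a) \<in> \<Union>C" "(x, b) \<in> \<Union>C" for x a b
    proof -
      obtain H where "H \<in> C" "(x, a) \<in> H" "(x, b) \<in> H" using pair[OF P] by blast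
      then show ?thesis using dominated_graph_unique[OF dom] by blast
    qed
    show "a \<le> norm x" if "(x, a) \<in> \<Union>C" for x a
      using that dominated_graph_le_norm[OF dom] by blast
  qed
qed

lemma hahn_banach_norming:
  fixes y0 :: "'b::real_normed_vector"
  obtains l :: "'b \<Rightarrow> real" where "\<And>x y. l (x + y) = l x + l y" "\<And>r x. l (r *\<^sub>R x) = r * l x"
    "l y0 = norm y0" "\<And>y. \<bar>l y\<bar> \<le> norm y"
proof -
  have "\<exists>U\<in>{H. dominated_graph y0 H}. \<forall>X\<in>C. X \<subseteq> U"
    if "C \<in> chains {H. dominated_graph y0 H}" for C
  proof (cases "C = {}")
    case True
    then show ?thesis using dominated_graph_span by blast
  next
    case False
    then show ?thesis using dominated_graph_Union_chain[OF that] by blast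
  qed
  then obtain H where "H \<in> {H. dominated_graph y0 H}"
    and max: "\<forall>X\<in>{H. dominated_graph y0 H}. H \<subseteq> X \<longrightarrow> X = H"
    using Zorn_Lemma2[of "{H. dominated_graph y0 H}"] by blast
  then have H: "dominated_graph y0 H" by simp
  have total: "\<exists>a. (x, a) \<in> H" for x
    using dominated_graph_extend[OF H] max by blast
  define l where "l x = (THE a. (x, a) \<in> H)" for x
  have lH: "(x, l x) \<in> H" for x
  proof -
    obtain a where a: "(x, a) \<in> H" using total by blast
    show ?thesis unfolding l_def
      by (rule theI[of _ a]) (use a dominated_graph_unique[OF H] in blast)+
  qed
  have l: "(x, a) \<in> H \<Longrightarrow> l x = a" for x a
    using dominated_graph_unique[OF H] lH by blast
  show ?thesis
  proof
    show "l (x + y) = l x + l y" for x y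
      by (rule l[OF dominated_graph_add[OF H lH lH]])
    show "l (r *\<^sub>R x) = r * l x" for r x
      by (rule l[OF dominated_graph_scaleR[OF H lH]])
    show "l y0 = norm y0"
      by (rule l[OF dominated_graph_base[OF H]])
    show "\<bar>l y\<bar> \<le> norm y" for y
      using dominated_graph_le_norm[OF H lH, of y] dominated_graph_le_norm[OF H lH, of "- y"]
        l[OF dominated_graph_scaleR[OF H lH, of "-1" y]]
      by simp
  qed
qed

section \<open>Scalar multiplications, operators and dual spaces\<close>

context
  fixes s :: "'k::real_normed_field \<Rightarrow> 'b::real_normed_vector \<Rightarrow> 'b"
  assumes s: "kspace s"
begin

lemma kspace_mult: "s a (s b x) = s (a * b) x"
  and kspace_add_right: "s a (x + y) = s a x + s a y"
  and kspace_add_left: "s (a + b) x = s a x + s b x"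
  and kspace_of_real: "s (of_real r) x = r *\<^sub>R x"
  and kspace_norm: "norm (s a x) = norm a * norm x"
  using s by (simp_all add: kspace_def)

lemma kspace_zero_left [simp]: "s 0 x = 0"
  using kspace_of_real[of 0 x] by simp

lemma kspace_diff_left: "s (a - b) x = s a x - s b x"
  using kspace_add_left[of "a - b" b x] by (simp add: algebra_simps)

lemma kspace_diff_right: "s a (x - y) = s a x - s a y"
  using kspace_add_right[of a "x - y" y] by (simp add: algebra_simps)

lemma kspace_commute: "s a (s b x) = s b (s a x)"
  by (simp add: kspace_mult mult.commute)

lemma kspace_scaleR: "s a (r *\<^sub>R x) = r *\<^sub>R s a x"
  by (metis kspace_commute kspace_of_real)

end

lemma Lop_bounded_linear:
  assumes "kspace sX" "kspace sY" "S \<in> Lop sX sY"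
  shows "bounded_linear S"
proof -
  obtain K where K: "\<And>x. norm (S x) \<le> K * norm x" and S: "klinear sX sY S"
    using assms(3) by (auto simp: Lop_def)
  show ?thesis
  proof (rule bounded_linear_intro[of _ K])
    show "S (x + y) = S x + S y" for x y using S by (simp add: klinear_def)
    show "S (r *\<^sub>R x) = r *\<^sub>R S x" for r x
      using S kspace_of_real[OF assms(1), of r x] kspace_of_real[OF assms(2), of r "S x"]
      unfolding klinear_def by metis
    show "norm (S x) \<le> norm x * K" for x using K[of x] by (simp add: mult.commute)
  qed
qed

lemma Lop_bound:
  assumes "S \<in> Lop sX sY"
  obtains K where "K \<ge> 0" "\<And>x. norm (S x) \<le> K * norm x"
proof -
  obtain K where K: "\<And>x. norm (S x) \<le> K * norm x" using assms by (auto simp: Lop_def)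
  have "norm (S x) \<le> max K 0 * norm x" for x
    using K[of x] by (smt (verit) mult_right_mono norm_ge_zero)
  then show ?thesis using that[of "max K 0"] by simp
qed

lemma Lop_add:
  assumes sY: "kspace sY" and "S \<in> Lop sX sY" "R \<in> Lop sX sY"
  shows "(\<lambda>x. S x + R x) \<in> Lop sX sY"
proof -
  obtain K1 K2 where "\<And>x. norm (S x) \<le> K1 * norm x" "\<And>x. norm (R x) \<le> K2 * norm x"
    using assms(2,3) by (auto simp: Lop_def)
  then have "norm (S x + R x) \<le> (K1 + K2) * norm x" for x
    by (smt (verit) distrib_right norm_triangle_ineq)
  moreover have "klinear sX sY (\<lambda>x. S x + R x)"
    using assms by (auto simp: Lop_def klinear_def kspace_add_right)
  ultimately show ?thesis by (auto simp: Lop_def)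
qed

lemma Lop_scale:
  assumes sY: "kspace sY" and "S \<in> Lop sX sY"
  shows "(\<lambda>x. sY c (S x)) \<in> Lop sX sY"
proof -
  obtain K where "\<And>x. norm (S x) \<le> K * norm x" using assms(2) by (auto simp: Lop_def)
  then have "norm (sY c (S x)) \<le> (norm c * K) * norm x" for x
    by (simp add: kspace_norm[OF sY] mult_left_mono mult.assoc)
  moreover have "klinear sX sY (\<lambda>x. sY c (S x))"
    using assms by (auto simp: Lop_def klinear_def kspace_add_right kspace_commute)
  ultimately show ?thesis by (auto simp: Lop_def)
qed

lemma kdual_add: "y \<in> kdual sY \<Longrightarrow> y (a + b) = y a + y b"
  and kdual_scale: "y \<in> kdual sY \<Longrightarrow> y (sY c a) = c * y a"
  by (simp_all add: kdual_def Lop_def klinear_def)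

lemma kdual_bounded_linear:
  assumes "kspace sY" "y \<in> kdual sY"
  shows "bounded_linear y"
proof -
  have "kspace (\<lambda>c (z::'k::real_normed_field). c * z)"
    by (simp add: kspace_def algebra_simps norm_mult scaleR_conv_of_real)
  with assms show ?thesis using Lop_bounded_linear by (auto simp: kdual_def)
qed

lemma kdual_norm_le:
  assumes "kspace sY" "y \<in> kdual sY" "onorm y = 1"
  shows "norm (y z) \<le> norm z"
  using onorm[OF kdual_bounded_linear[OF assms(1,2)], of z] assms(3) by simp

text \<open>For \<open>\<complex>\<close> this is the classical \<open>l y - i l (i y)\<close>; for \<open>\<real>\<close> it is \<open>l\<close> itself.\<close>

definition complexify :: "('k::real_normed_field \<Rightarrow> 'b \<Rightarrow> 'b) \<Rightarrow> ('b \<Rightarrow> real) \<Rightarrow> 'b \<Rightarrow> 'k" where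
  "complexify s l y = of_real (l y) - imag_unit * of_real (l (s imag_unit y))"

context
  fixes s :: "'k::real_normed_field \<Rightarrow> 'b::real_normed_vector \<Rightarrow> 'b" and l :: "'b \<Rightarrow> real"
  assumes s: "kspace s"
    and l_add: "\<And>x y. l (x + y) = l x + l y" and l_scaleR: "\<And>r x. l (r *\<^sub>R x) = r * l x"
begin

lemma complexify_add: "complexify s l (x + y) = complexify s l x + complexify s l y"
  by (simp add: complexify_def l_add kspace_add_right[OF s] algebra_simps)

lemma re_part_complexify: "re_part (complexify s l y) = l y"
  by (simp add: complexify_def mult.commute)

lemma complexify_scale: "complexify s l (s c y) = c * complexify s l y"
proof -
  have l_diff: "l (x - y) = l x - l y" for x y
    using l_add[of "x - y" y] by simp
  define \<alpha> where "\<alpha> = re_part c"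
  define \<beta> where "\<beta> = re_part (imag_unit * c)"
  have c: "c = of_real \<alpha> - imag_unit * of_real \<beta>"
    unfolding \<alpha>_def \<beta>_def by (rule re_part_decomp[symmetric])
  have "s (imag_unit * of_real \<beta>) y = \<beta> *\<^sub>R s imag_unit y"
    by (metis kspace_mult[OF s] kspace_of_real[OF s] mult.commute)
  then have scy: "s c y = \<alpha> *\<^sub>R y - \<beta> *\<^sub>R s imag_unit y"
    by (simp add: c kspace_diff_left[OF s] kspace_of_real[OF s])
  then have l1: "l (s c y) = \<alpha> * l y - \<beta> * l (s imag_unit y)"
    by (simp add: l_diff l_scaleR)
  show ?thesis
  proof (cases "imag_unit = (0::'k)")
    case True
    then show ?thesis using l1 c l_scaleR[of 0 0] by (simp add: complexify_def kspace_zero_left[OF s])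
  next
    case False
    then have JJ: "imag_unit * imag_unit = (-1::'k)" using imag_unit_cases by blast
    have "s imag_unit (s c y) = \<alpha> *\<^sub>R s imag_unit y - \<beta> *\<^sub>R s (imag_unit * imag_unit) y"
      by (simp add: scy kspace_diff_right[OF s] kspace_scaleR[OF s] kspace_mult[OF s])
    also have "\<dots> = \<alpha> *\<^sub>R s imag_unit y + \<beta> *\<^sub>R y"
      using JJ kspace_of_real[OF s, of "-1" y] by simp
    finally have l2: "l (s imag_unit (s c y)) = \<alpha> * l (s imag_unit y) + \<beta> * l y"
      by (simp add: l_add l_scaleR)
    have "c * complexify s l y = of_real \<alpha> * of_real (l y)
        - of_real \<alpha> * imag_unit * of_real (l (s imag_unit y))
        - of_real \<beta> * imag_unit * of_real (l y)
        + of_real \<beta> * (imag_unit * imag_unit) * of_real (l (s imag_unit y))"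
      unfolding complexify_def by (subst c) (simp add: algebra_simps)
    also have "\<dots> = complexify s l (s c y)"
      using JJ by (simp add: complexify_def l1 l2 algebra_simps)
    finally show ?thesis by simp
  qed
qed

lemma norm_complexify_le:
  assumes l_le: "\<And>y. \<bar>l y\<bar> \<le> norm y"
  shows "norm (complexify s l y) \<le> norm y"
proof (cases "complexify s l y = 0")
  case False
  define \<theta> where "\<theta> = of_real (norm (complexify s l y)) / complexify s l y"
  have "norm \<theta> = 1" using False by (simp add: \<theta>_def norm_divide)
  have "complexify s l (s \<theta> y) = of_real (norm (complexify s l y))"
    using False by (simp add: complexify_scale \<theta>_def)
  then have "norm (complexify s l y) = l (s \<theta> y)"
    using re_part_complexify[of "s \<theta> y"] by simp
  also have "\<dots> \<le> norm (s \<theta> y)" using l_le[of "s \<theta> y"] by simp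
  also have "\<dots> = norm y" by (simp add: kspace_norm[OF s] \<open>norm \<theta> = 1\<close>)
  finally show ?thesis .
qed simp

end

lemma kdual_norming_functional:
  fixes s :: "'k::real_normed_field \<Rightarrow> 'b::real_normed_vector \<Rightarrow> 'b"
  assumes s: "kspace s" and "y0 \<noteq> 0"
  obtains f where "f \<in> kdual s" "onorm f = 1" "f y0 = of_real (norm y0)"
proof -
  obtain l :: "'b \<Rightarrow> real" where l_add: "\<And>x y. l (x + y) = l x + l y"
    and l_scaleR: "\<And>r x. l (r *\<^sub>R x) = r * l x"
    and "l y0 = norm y0" and l_le: "\<And>y. \<bar>l y\<bar> \<le> norm y"
    using hahn_banach_norming by blast
  define f where "f = complexify s l"
  note f_add = complexify_add[OF s l_add l_scaleR, folded f_def]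
    and f_scale = complexify_scale[OF s l_add l_scaleR, folded f_def]
    and f_le = norm_complexify_le[OF s l_add l_scaleR l_le, folded f_def]
  have "re_part (f y0) = norm y0"
    using re_part_complexify[OF s l_add l_scaleR] \<open>l y0 = norm y0\<close> by (simp add: f_def)
  moreover have "norm (f y0) \<le> norm y0" by (rule f_le)
  ultimately have "re_part (f y0) = norm (f y0)"
    using abs_re_part_le[of "f y0"] by simp
  then have fy0: "f y0 = of_real (norm y0)"
    using re_part_eq_norm_imp \<open>re_part (f y0) = norm y0\<close> by metis
  have "bounded_linear f"
  proof (rule bounded_linear_intro[of _ 1])
    show "f (x + y) = f x + f y" for x y by (rule f_add)
    show "f (r *\<^sub>R x) = r *\<^sub>R f x" for r x
      using f_scale[of "of_real r" x] by (simp add: kspace_of_real[OF s] scaleR_conv_of_real)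
    show "norm (f x) \<le> norm x * 1" for x using f_le by simp
  qed
  then have "1 \<le> onorm f" using le_onorm[of f y0] fy0 \<open>y0 \<noteq> 0\<close> by simp
  moreover have "onorm f \<le> 1" by (rule onorm_bound) (use f_le in auto)
  moreover have "f \<in> kdual s"
    unfolding kdual_def Lop_def klinear_def using f_add f_scale f_le by (auto intro!: exI[of _ 1])
  ultimately show ?thesis using that fy0 by simp
qed

section \<open>The \<open>G\<close>-norm and its supporting functionals\<close>

locale gnorm_space =
  fixes sX :: "'k::real_normed_field \<Rightarrow> 'a::banach \<Rightarrow> 'a" and sY :: "'k \<Rightarrow> 'b::banach \<Rightarrow> 'b"
    and G :: "'a \<Rightarrow> 'b"
  assumes sX: "kspace sX" and sY: "kspace sY" and G: "G \<in> Lop sX sY" and onorm_G: "onorm G = 1"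
    and norm_gnorm: "norm_on_Lop sX sY (gnorm G)"
begin

lemma norm_G_le: "norm x = 1 \<Longrightarrow> norm (G x) \<le> 1"
  using onorm[OF Lop_bounded_linear[OF sX sY G], of x] onorm_G by simp

lemma exists_G_almost_norming:
  assumes "\<delta> > 0"
  shows "\<exists>x. norm x = 1 \<and> norm (G x) > 1 - \<delta>"
proof -
  define d where "d = min \<delta> (1 / 2)"
  have d: "d > 0" "d \<le> \<delta>" "d < 1" using assms by (auto simp: d_def)
  have G_lin: "bounded_linear G" by (rule Lop_bounded_linear[OF sX sY G])
  have "bdd_above (range (\<lambda>x. norm (G x) / norm x))"
    using le_onorm[OF G_lin] unfolding bdd_above_def by blast
  moreover have "1 - d < (SUP x. norm (G x) / norm x)"
    using onorm_G d by (simp add: onorm_def)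
  ultimately obtain x where x: "1 - d < norm (G x) / norm x"
    using less_cSUP_iff by blast
  then have "x \<noteq> 0" using d by auto
  then have u: "norm ((1 / norm x) *\<^sub>R x) = 1"
    and "norm (G ((1 / norm x) *\<^sub>R x)) = norm (G x) / norm x"
    using G_lin by (simp_all add: linear_simps(5) bounded_linear.linear)
  then have "1 - \<delta> < norm (G ((1 / norm x) *\<^sub>R x))" using x d(2) by linarith
  with u show ?thesis by blast
qed

definition gsup :: "('a \<Rightarrow> 'b) \<Rightarrow> real \<Rightarrow> real" where
  "gsup S \<delta> = Sup ((\<lambda>x. norm (S x)) ` {x. norm x = 1 \<and> norm (G x) > 1 - \<delta>})"

lemma gnorm_eq_Inf_gsup: "gnorm G S = Inf (gsup S ` {0<..})"
  by (simp add: gnorm_def gsup_def)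

lemma gsup_set:
  assumes "S \<in> Lop sX sY" "\<delta> > 0"
  shows "bdd_above ((\<lambda>x. norm (S x)) ` {x. norm x = 1 \<and> norm (G x) > 1 - \<delta>})"
    and "(\<lambda>x. norm (S x)) ` {x. norm x = 1 \<and> norm (G x) > 1 - \<delta>} \<noteq> {}"
proof -
  obtain K where "\<And>x. norm (S x) \<le> K * norm x" using Lop_bound[OF assms(1)] by blast
  then show "bdd_above ((\<lambda>x. norm (S x)) ` {x. norm x = 1 \<and> norm (G x) > 1 - \<delta>})"
    unfolding bdd_above_def by (metis (mono_tags, lifting) imageE mem_Collect_eq mult.right_neutral)
  show "(\<lambda>x. norm (S x)) ` {x. norm x = 1 \<and> norm (G x) > 1 - \<delta>} \<noteq> {}"
    using exists_G_almost_norming[OF assms(2)] by blast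
qed

lemma norm_le_gsup:
  assumes "S \<in> Lop sX sY" "\<delta> > 0" "norm x = 1" "norm (G x) > 1 - \<delta>"
  shows "norm (S x) \<le> gsup S \<delta>"
  unfolding gsup_def using assms by (intro cSup_upper[OF _ gsup_set(1)]) auto

lemma gnorm_le_gsup:
  assumes S: "S \<in> Lop sX sY" and "\<delta> > 0"
  shows "gnorm G S \<le> gsup S \<delta>"
proof -
  have "0 \<le> gsup S d" if "d > 0" for d
    using exists_G_almost_norming[OF that] norm_le_gsup[OF S that] by (meson norm_ge_zero order_trans)
  then have "bdd_below (gsup S ` {0<..})" by (auto simp: bdd_below_def)
  then show ?thesis
    unfolding gnorm_eq_Inf_gsup using \<open>\<delta> > 0\<close> by (intro cInf_lower) auto
qed

lemma gnorm_upper: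
  assumes S: "S \<in> Lop sX sY" and "\<epsilon> > 0"
  obtains \<delta> where "\<delta> > 0" "\<And>x. norm x = 1 \<Longrightarrow> norm (G x) > 1 - \<delta> \<Longrightarrow> norm (S x) \<le> gnorm G S + \<epsilon>"
proof -
  have "Inf (gsup S ` {0<..}) < gnorm G S + \<epsilon>"
    using \<open>\<epsilon> > 0\<close> by (simp add: gnorm_eq_Inf_gsup)
  then obtain \<delta> where "\<delta> > 0" and \<delta>: "gsup S \<delta> < gnorm G S + \<epsilon>"
    using cInf_lessD[of "gsup S ` {0<..}" "gnorm G S + \<epsilon>"] by auto
  moreover have "norm (S x) \<le> gnorm G S + \<epsilon>" if "norm x = 1" "norm (G x) > 1 - \<delta>" for x
    using norm_le_gsup[OF S \<open>\<delta> > 0\<close> that] \<delta> by linarith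
  ultimately show ?thesis using that by blast
qed

lemma gnorm_lower:
  assumes S: "S \<in> Lop sX sY" and "\<delta> > 0" "\<epsilon> > 0"
  obtains x where "norm x = 1" "norm (G x) > 1 - \<delta>" "norm (S x) > gnorm G S - \<epsilon>"
proof -
  have "gnorm G S - \<epsilon> < gsup S \<delta>"
    using gnorm_le_gsup[OF S \<open>\<delta> > 0\<close>] \<open>\<epsilon> > 0\<close> by simp
  then show ?thesis
    unfolding gsup_def using that less_cSup_iff[OF gsup_set(2,1)[OF S \<open>\<delta> > 0\<close>]] by auto
qed

lemma gnorm_norming_pair:
  assumes R: "R \<in> Lop sX sY" and "\<delta> > 0" "\<eta> > 0" "\<eta> < gnorm G R"
  obtains x y where "norm x = 1" "norm (G x) > 1 - \<delta>" "y \<in> kdual sY" "onorm y = 1"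
    "gnorm G R - \<eta> < re_part (y (R x))"
proof -
  obtain x where x: "norm x = 1" "norm (G x) > 1 - \<delta>" "norm (R x) > gnorm G R - \<eta>"
    using gnorm_lower[OF R \<open>\<delta> > 0\<close> \<open>\<eta> > 0\<close>] by blast
  then have "R x \<noteq> 0" using \<open>\<eta> < gnorm G R\<close> by auto
  then obtain y where "y \<in> kdual sY" "onorm y = 1" "y (R x) = of_real (norm (R x))"
    using kdual_norming_functional[OF sY] by blast
  with x that show ?thesis by simp
qed

lemma gnorm_nonneg: "S \<in> Lop sX sY \<Longrightarrow> gnorm G S \<ge> 0"
  and gnorm_eq_0_imp: "S \<in> Lop sX sY \<Longrightarrow> gnorm G S = 0 \<Longrightarrow> S = (\<lambda>x. 0)"
  and gnorm_scale: "S \<in> Lop sX sY \<Longrightarrow> gnorm G (\<lambda>x. sY c (S x)) = norm c * gnorm G S"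
  using norm_gnorm by (simp_all add: norm_on_Lop_def)

lemma op_dual_add: "f \<in> op_dual sX sY G \<Longrightarrow> S \<in> Lop sX sY \<Longrightarrow> R \<in> Lop sX sY
    \<Longrightarrow> f (\<lambda>x. S x + R x) = f S + f R"
  and op_dual_scale: "f \<in> op_dual sX sY G \<Longrightarrow> S \<in> Lop sX sY \<Longrightarrow> f (\<lambda>x. sY c (S x)) = c * f S"
  and op_dual_outside: "f \<in> op_dual sX sY G \<Longrightarrow> S \<notin> Lop sX sY \<Longrightarrow> f S = 0"
  by (simp_all add: op_dual_def)

definition supporting :: "(('a \<Rightarrow> 'b) \<Rightarrow> 'k) \<Rightarrow> ('a \<Rightarrow> 'b) \<Rightarrow> bool" where
  "supporting f T \<longleftrightarrow> f \<in> op_dual sX sY G \<and> (\<forall>S\<in>Lop sX sY. norm (f S) \<le> gnorm G S) \<and> f T = 1"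

lemma op_dual_norm_le_gnorm:
  assumes f: "f \<in> op_dual sX sY G" and "op_dual_norm sX sY G f = 1" and S: "S \<in> Lop sX sY"
  shows "norm (f S) \<le> gnorm G S"
proof -
  obtain K where K: "\<And>S. S \<in> Lop sX sY \<Longrightarrow> norm (f S) \<le> K * gnorm G S"
    using f unfolding op_dual_def by blast
  define B where "B = (\<lambda>S. norm (f S)) ` {S \<in> Lop sX sY. gnorm G S \<le> 1}"
  have "v \<le> max K 0" if v: "v \<in> B" for v
  proof -
    obtain R where R: "R \<in> Lop sX sY" "gnorm G R \<le> 1" "v = norm (f R)" using v by (auto simp: B_def)
    have "K * gnorm G R \<le> max K 0" using R(2) gnorm_nonneg[OF R(1)]
      by (metis max.cobounded2 max_def mult_left_le mult_nonpos_nonneg)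
    with K[OF R(1)] R(3) show ?thesis by simp
  qed
  then have "bdd_above B" by (auto simp: bdd_above_def)
  have "Sup B = 1" using assms(2) by (simp add: op_dual_norm_def B_def)
  show ?thesis
  proof (cases "gnorm G S = 0")
    case True
    then have "S = (\<lambda>x. sY 0 (S x))" using gnorm_eq_0_imp[OF S] by (simp add: kspace_zero_left[OF sY])
    then have "f S = 0" using op_dual_scale[OF f S, of 0] by simp
    then show ?thesis using True by simp
  next
    case False
    then have pos: "gnorm G S > 0" using gnorm_nonneg[OF S] by simp
    define S' where "S' = (\<lambda>x. sY (of_real (1 / gnorm G S)) (S x))"
    have "S' \<in> Lop sX sY" unfolding S'_def by (rule Lop_scale[OF sY S])
    moreover have "gnorm G S' = 1" unfolding S'_def using gnorm_scale[OF S] pos by (simp add: norm_divide)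
    ultimately have "norm (f S') \<in> B" by (auto simp: B_def)
    then have "norm (f S') \<le> 1"
      using cSup_upper[OF _ \<open>bdd_above B\<close>] \<open>Sup B = 1\<close> by metis
    moreover have "norm (f S') = norm (f S) / gnorm G S"
      unfolding S'_def using op_dual_scale[OF f S] pos by (simp add: norm_mult norm_divide)
    ultimately show ?thesis using pos by (simp add: divide_le_eq)
  qed
qed

lemma unit_functional_iff_supporting:
  assumes T: "T \<in> Lop sX sY" "gnorm G T = 1"
  shows "f \<in> op_dual sX sY G \<and> op_dual_norm sX sY G f = 1 \<and> f T = 1 \<longleftrightarrow> supporting f T"
proof
  assume "f \<in> op_dual sX sY G \<and> op_dual_norm sX sY G f = 1 \<and> f T = 1"
  then show "supporting f T"
    by (simp add: supporting_def op_dual_norm_le_gnorm)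
next
  assume "supporting f T"
  then have f: "f \<in> op_dual sX sY G" "\<And>S. S \<in> Lop sX sY \<Longrightarrow> norm (f S) \<le> gnorm G S" "f T = 1"
    by (auto simp: supporting_def)
  define B where "B = (\<lambda>S. norm (f S)) ` {S \<in> Lop sX sY. gnorm G S \<le> 1}"
  have "1 \<in> B" using T f(3) by (force simp: B_def)
  moreover have "\<forall>v\<in>B. v \<le> 1" using f(2) by (auto simp: B_def intro: order_trans)
  ultimately have "Sup B = 1" by (intro cSup_eq_maximum) auto
  then show "f \<in> op_dual sX sY G \<and> op_dual_norm sX sY G f = 1 \<and> f T = 1"
    using f by (simp add: op_dual_norm_def B_def)
qed

lemma smooth_point_iff_unique_supporting:
  assumes "T \<in> Lop sX sY" "gnorm G T = 1"
  shows "smooth_point sX sY G T \<longleftrightarrow> (\<exists>!f. supporting f T)"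
  by (simp only: smooth_point_def unit_functional_iff_supporting[OF assms])

text \<open>Apply the inequality to \<open>-S\<close>, and recover the imaginary part as the real part at
  \<open>imag_unit \<cdot> S\<close>.\<close>

lemma op_dual_eqI:
  assumes f: "f \<in> op_dual sX sY G" and g: "g \<in> op_dual sX sY G"
    and le: "\<And>S. S \<in> Lop sX sY \<Longrightarrow> re_part (g S) \<le> re_part (f S)"
  shows "g = f"
proof
  fix S
  show "g S = f S"
  proof (cases "S \<in> Lop sX sY")
    case True
    have re_eq: "re_part (g R) = re_part (f R)" if R: "R \<in> Lop sX sY" for R
    proof -
      have "re_part (g (\<lambda>x. sY (-1) (R x))) \<le> re_part (f (\<lambda>x. sY (-1) (R x)))"
        by (rule le[OF Lop_scale[OF sY R]])
      then have "re_part (f R) \<le> re_part (g R)"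
        by (simp add: op_dual_scale[OF f R] op_dual_scale[OF g R])
      with le[OF R] show ?thesis by simp
    qed
    have "re_part (g (\<lambda>x. sY imag_unit (S x))) = re_part (f (\<lambda>x. sY imag_unit (S x)))"
      by (rule re_eq[OF Lop_scale[OF sY True]])
    then have im_eq: "re_part (imag_unit * g S) = re_part (imag_unit * f S)"
      by (simp add: op_dual_scale[OF f True] op_dual_scale[OF g True])
    have "g S = of_real (re_part (g S)) - imag_unit * of_real (re_part (imag_unit * g S))"
      by (rule re_part_decomp[symmetric])
    also have "\<dots> = of_real (re_part (f S)) - imag_unit * of_real (re_part (imag_unit * f S))"
      by (simp only: re_eq[OF True] im_eq)
    also have "\<dots> = f S"
      by (rule re_part_decomp)
    finally show ?thesis .
  qed (simp add: op_dual_outside f g)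
qed

lemma norm_limit_le_gnorm:
  assumes F: "F \<noteq> bot"
    and ev: "eventually (\<lambda>p. norm (fst p) = 1 \<and> snd p \<in> kdual sY \<and> onorm (snd p) = 1) F"
    and G_lim: "((\<lambda>p. norm (G (fst p))) \<longlongrightarrow> 1) F"
    and S: "S \<in> Lop sX sY" and lim: "((\<lambda>p. snd p (S (fst p))) \<longlongrightarrow> v) F"
  shows "norm v \<le> gnorm G S"
proof (rule field_le_epsilon)
  fix e :: real
  assume "e > 0"
  then obtain \<delta> where "\<delta> > 0"
    and \<delta>: "\<And>x. norm x = 1 \<Longrightarrow> norm (G x) > 1 - \<delta> \<Longrightarrow> norm (S x) \<le> gnorm G S + e"
    using gnorm_upper[OF S] by blast
  have "eventually (\<lambda>p. dist (norm (G (fst p))) 1 < \<delta>) F"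
    using G_lim \<open>\<delta> > 0\<close> by (simp add: tendsto_iff)
  with ev have "eventually (\<lambda>p. norm (snd p (S (fst p))) \<le> gnorm G S + e) F"
  proof eventually_elim
    case (elim p)
    then have "norm (S (fst p)) \<le> gnorm G S + e"
      using \<delta> by (simp add: dist_real_def)
    moreover have "norm (snd p (S (fst p))) \<le> norm (S (fst p))"
      using kdual_norm_le[OF sY] elim by blast
    ultimately show ?case by simp
  qed
  then show "norm v \<le> gnorm G S + e"
    using tendsto_upperbound[OF tendsto_norm[OF lim] _ F] by blast
qed

lemma W_set_supporting:
  assumes T: "T \<in> Lop sX sY" and "\<phi> \<in> W_set sX sY G T"
  shows "supporting \<phi> T"
proof -
  obtain F :: "('a \<times> ('b \<Rightarrow> 'k)) filter" where F: "F \<noteq> bot"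
    and ev: "eventually (\<lambda>p. norm (fst p) = 1 \<and> snd p \<in> kdual sY \<and> onorm (snd p) = 1) F"
    and G_lim: "((\<lambda>p. norm (G (fst p))) \<longlongrightarrow> 1) F"
    and T_lim: "((\<lambda>p. snd p (T (fst p))) \<longlongrightarrow> 1) F"
    and lim: "\<forall>S\<in>Lop sX sY. ((\<lambda>p. snd p (S (fst p))) \<longlongrightarrow> \<phi> S) F"
    and "\<phi> \<in> op_dual sX sY G"
    using assms(2) unfolding W_set_def by blast
  moreover have "\<phi> T = 1" using tendsto_unique[OF F lim[rule_format, OF T] T_lim] .
  moreover have "\<forall>S\<in>Lop sX sY. norm (\<phi> S) \<le> gnorm G S"
    using norm_limit_le_gnorm[OF F ev G_lim] lim by blast
  ultimately show ?thesis by (simp add: supporting_def)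
qed

end

section \<open>Weak* cluster points of the nets defining \<open>\<W>(T)\<close>\<close>

text \<open>Tychonoff's theorem for nets, with the filter \<open>U\<close> in the role of the subnet.\<close>

lemma pointwise_bounded_cluster:
  fixes \<Phi> :: "'p \<Rightarrow> 'i \<Rightarrow> 'k::real_normed_field"
  assumes F: "F \<noteq> bot" and bound: "eventually (\<lambda>p. \<forall>i. norm (\<Phi> p i) \<le> K i) F"
  obtains \<psi> U where "U \<noteq> bot" "U \<le> F" "\<And>i. ((\<lambda>p. \<Phi> p i) \<longlongrightarrow> \<psi> i) U" "\<And>i. norm (\<psi> i) \<le> K i"
proof -
  define Q where "Q = PiE UNIV (\<lambda>i. cball (0::'k) (K i))"
  have "compactin (product_topology (\<lambda>i. euclidean) UNIV) Q"
    unfolding Q_def compactin_PiE by (simp add: compact_cball_field)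
  then have "compact Q" by (simp add: euclidean_product_topology)
  have "filtermap \<Phi> F \<noteq> bot" using F by (simp add: filtermap_bot_iff)
  moreover have "eventually (\<lambda>q. q \<in> Q) (filtermap \<Phi> F)"
    using bound by (simp add: eventually_filtermap Q_def PiE_iff)
  ultimately obtain \<psi> where "\<psi> \<in> Q" and cluster: "inf (nhds \<psi>) (filtermap \<Phi> F) \<noteq> bot"
    using \<open>compact Q\<close> unfolding compact_filter by blast
  define U where "U = inf (filtercomap \<Phi> (nhds \<psi>)) F"
  have "U \<noteq> bot"
  proof
    assume "U = bot"
    then have "eventually (\<lambda>_. False) U" by simp
    then obtain A B where "eventually A (filtercomap \<Phi> (nhds \<psi>))" "eventually B F"
      and AB: "\<And>p. A p \<Longrightarrow> B p \<Longrightarrow> False"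
      unfolding U_def eventually_inf by blast
    then obtain N where N: "eventually N (nhds \<psi>)" and NA: "\<And>p. N (\<Phi> p) \<Longrightarrow> A p"
      unfolding eventually_filtercomap by blast
    have "eventually (\<lambda>p. \<not> N (\<Phi> p)) F"
      using \<open>eventually B F\<close> by (rule eventually_mono) (use AB NA in blast)
    then have "eventually (\<lambda>q. \<not> N q) (filtermap \<Phi> F)"
      by (simp add: eventually_filtermap)
    with N have "eventually (\<lambda>_. False) (inf (nhds \<psi>) (filtermap \<Phi> F))"
      unfolding eventually_inf by blast
    with cluster show False by simp
  qed
  moreover have "U \<le> F" by (simp add: U_def)
  moreover have "((\<lambda>p. \<Phi> p i) \<longlongrightarrow> \<psi> i) U" for i
  proof -
    have "(\<Phi> \<longlongrightarrow> \<psi>) U" unfolding filterlim_iff_le_filtercomap U_def by simp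
    then have "((\<lambda>p. (\<lambda>q. q i) (\<Phi> p)) \<longlongrightarrow> (\<lambda>q. q i) \<psi>) U"
      by (rule continuous_on_tendsto_compose[OF continuous_on_product_coordinates]) auto
    then show ?thesis by simp
  qed
  moreover have "norm (\<psi> i) \<le> K i" for i
    using \<open>\<psi> \<in> Q\<close> by (simp add: Q_def PiE_iff)
  ultimately show ?thesis using that by blast
qed

context gnorm_space
begin

lemma op_dual_of_limit:
  assumes U: "U \<noteq> bot"
    and ev: "eventually (\<lambda>p. norm (fst p) = 1 \<and> snd p \<in> kdual sY \<and> onorm (snd p) = 1) U"
    and G_lim: "((\<lambda>p. norm (G (fst p))) \<longlongrightarrow> 1) U"
    and lim: "\<And>S. S \<in> Lop sX sY \<Longrightarrow> ((\<lambda>p. snd p (S (fst p))) \<longlongrightarrow> \<phi> S) U"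
    and outside: "\<And>S. S \<notin> Lop sX sY \<Longrightarrow> \<phi> S = 0"
  shows "\<phi> \<in> op_dual sX sY G"
proof -
  have ev_kdual: "eventually (\<lambda>p. snd p \<in> kdual sY) U"
    using ev by (rule eventually_mono) blast
  have "\<phi> (\<lambda>x. S x + R x) = \<phi> S + \<phi> R" if S: "S \<in> Lop sX sY" and R: "R \<in> Lop sX sY" for S R
  proof -
    have "((\<lambda>p. snd p (S (fst p)) + snd p (R (fst p))) \<longlongrightarrow> \<phi> S + \<phi> R) U"
      by (intro tendsto_add lim S R)
    moreover have "eventually (\<lambda>p. snd p (S (fst p)) + snd p (R (fst p)) = snd p (S (fst p) + R (fst p))) U"
      using ev_kdual by (rule eventually_mono) (simp add: kdual_add)
    ultimately have "((\<lambda>p. snd p (S (fst p) + R (fst p))) \<longlongrightarrow> \<phi> S + \<phi> R) U"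
      using tendsto_cong by fast
    then show ?thesis using tendsto_unique[OF U lim[OF Lop_add[OF sY S R]]] by simp
  qed
  moreover have "\<phi> (\<lambda>x. sY c (S x)) = c * \<phi> S" if S: "S \<in> Lop sX sY" for S c
  proof -
    have "((\<lambda>p. c * snd p (S (fst p))) \<longlongrightarrow> c * \<phi> S) U"
      by (intro tendsto_mult_left lim S)
    moreover have "eventually (\<lambda>p. c * snd p (S (fst p)) = snd p (sY c (S (fst p)))) U"
      using ev_kdual by (rule eventually_mono) (simp add: kdual_scale)
    ultimately have "((\<lambda>p. snd p (sY c (S (fst p)))) \<longlongrightarrow> c * \<phi> S) U"
      using tendsto_cong by fast
    then show ?thesis using tendsto_unique[OF U lim[OF Lop_scale[OF sY S]]] by simp
  qed
  moreover have "norm (\<phi> S) \<le> 1 * gnorm G S" if "S \<in> Lop sX sY" for S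
    using norm_limit_le_gnorm[OF U ev G_lim that lim[OF that]] by simp
  ultimately show ?thesis
    unfolding op_dual_def using outside by blast
qed

lemma W_set_cluster_point:
  assumes F: "F \<noteq> bot"
    and ev: "eventually (\<lambda>p. norm (fst p) = 1 \<and> snd p \<in> kdual sY \<and> onorm (snd p) = 1) F"
    and G_lim: "((\<lambda>p. norm (G (fst p))) \<longlongrightarrow> 1) F"
    and T_lim: "((\<lambda>p. snd p (T (fst p))) \<longlongrightarrow> 1) F"
  obtains \<phi> U where "\<phi> \<in> W_set sX sY G T" "U \<noteq> bot" "U \<le> F"
    "\<And>S. S \<in> Lop sX sY \<Longrightarrow> ((\<lambda>p. snd p (S (fst p))) \<longlongrightarrow> \<phi> S) U"
proof -
  define \<Phi> where "\<Phi> p S = (if S \<in> Lop sX sY then snd p (S (fst p)) else 0)"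
    for p :: "'a \<times> ('b \<Rightarrow> 'k)" and S :: "'a \<Rightarrow> 'b"
  define K where "K S = (if S \<in> Lop sX sY then onorm S else 0)" for S :: "'a \<Rightarrow> 'b"
  have "eventually (\<lambda>p. \<forall>S. norm (\<Phi> p S) \<le> K S) F"
    using ev
  proof eventually_elim
    case (elim p)
    have "norm (snd p (S (fst p))) \<le> onorm S" if "S \<in> Lop sX sY" for S
      using kdual_norm_le[OF sY, of "snd p" "S (fst p)"] elim
        onorm[OF Lop_bounded_linear[OF sX sY that], of "fst p"] by simp
    then show ?case by (simp add: \<Phi>_def K_def)
  qed
  then obtain \<phi> U where U: "U \<noteq> bot" "U \<le> F"
    and lim: "\<And>S. ((\<lambda>p. \<Phi> p S) \<longlongrightarrow> \<phi> S) U" and bound: "\<And>S. norm (\<phi> S) \<le> K S"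
    using pointwise_bounded_cluster[OF F] by blast
  have lim_Lop: "((\<lambda>p. snd p (S (fst p))) \<longlongrightarrow> \<phi> S) U" if "S \<in> Lop sX sY" for S
    using lim[of S] that by (simp add: \<Phi>_def)
  have ev_U: "eventually (\<lambda>p. norm (fst p) = 1 \<and> snd p \<in> kdual sY \<and> onorm (snd p) = 1) U"
    using U(2) ev by (rule filter_leD)
  have G_lim_U: "((\<lambda>p. norm (G (fst p))) \<longlongrightarrow> 1) U"
    and T_lim_U: "((\<lambda>p. snd p (T (fst p))) \<longlongrightarrow> 1) U"
    using G_lim T_lim U(2) by (auto intro: tendsto_mono)
  have "\<phi> S = 0" if "S \<notin> Lop sX sY" for S
    using bound[of S] that by (simp add: K_def)
  then have "\<phi> \<in> op_dual sX sY G"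
    using op_dual_of_limit[OF U(1) ev_U G_lim_U lim_Lop] by blast
  then have "\<phi> \<in> W_set sX sY G T"
    unfolding W_set_def using U(1) ev_U G_lim_U T_lim_U lim_Lop by blast
  then show ?thesis using that U lim_Lop by blast
qed

end

section \<open>Elements of \<open>\<W>(T)\<close> dominating a supporting functional\<close>

lemma nested_sets_filter:
  fixes P :: "real \<Rightarrow> 'p set"
  assumes nonempty: "\<And>\<epsilon>. \<epsilon> > 0 \<Longrightarrow> P \<epsilon> \<noteq> {}"
    and mono: "\<And>\<epsilon> \<epsilon>'. 0 < \<epsilon> \<Longrightarrow> \<epsilon> \<le> \<epsilon>' \<Longrightarrow> P \<epsilon> \<subseteq> P \<epsilon>'"
  obtains F where "F \<noteq> bot" "\<And>\<epsilon>. \<epsilon> > 0 \<Longrightarrow> eventually (\<lambda>p. p \<in> P \<epsilon>) F"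
proof -
  define F where "F = (INF \<epsilon>\<in>{0<..}. principal (P \<epsilon>))"
  have ev_F: "eventually Q F \<longleftrightarrow> (\<exists>\<epsilon>\<in>{0<..}. eventually Q (principal (P \<epsilon>)))" for Q
    unfolding F_def
  proof (rule eventually_INF_base)
    fix a b :: real
    assume "a \<in> {0<..}" "b \<in> {0<..}"
    then show "\<exists>c\<in>{0<..}. principal (P c) \<le> inf (principal (P a)) (principal (P b))"
      using mono by (intro bexI[of _ "min a b"]) auto
  qed auto
  have "F \<noteq> bot"
  proof
    assume "F = bot"
    then have "eventually (\<lambda>_. False) F" by simp
    then obtain \<epsilon> where "\<epsilon> > 0" "eventually (\<lambda>_. False) (principal (P \<epsilon>))"
      using ev_F by auto
    with nonempty show False by (auto simp: eventually_principal)
  qed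
  moreover have "eventually (\<lambda>p. p \<in> P \<epsilon>) F" if "\<epsilon> > 0" for \<epsilon>
    using that by (auto simp: ev_F eventually_principal)
  ultimately show ?thesis using that by blast
qed

lemma near_one_estimate:
  fixes u v :: "'k::real_normed_field"
  assumes e: "0 < e" "e \<le> 1" and "t > 0" and t: "t * (\<bar>a\<bar> + M + 2) \<le> e\<^sup>2 / 4"
    and v: "norm v \<le> M" and u: "norm u \<le> 1 + t * (e / 2)"
    and sum: "1 + t * a - t * (e / 2) < re_part u + t * re_part v"
  shows "norm (u - 1) < e" and "a - e < re_part v"
proof -
  have re_u: "re_part u \<le> 1 + t * (e / 2)" using abs_re_part_le[of u] u by linarith
  have re_v: "re_part v \<le> M" using abs_re_part_le[of v] v by linarith
  have "t * (a - e) < t * re_part v" using sum re_u by (simp add: algebra_simps)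
  then show "a - e < re_part v" using \<open>t > 0\<close> by simp
  have "e\<^sup>2 \<le> 1" using e by (simp add: power_le_one)
  have "M \<ge> 0" using v norm_ge_zero[of v] by linarith
  then have "t * 2 \<le> t * (\<bar>a\<bar> + M + 2)"
    using \<open>t > 0\<close> by (intro mult_left_mono) auto
  then have "t \<le> 1 / 8" using t \<open>e\<^sup>2 \<le> 1\<close> by linarith
  have "t * (e / 2) \<le> t * (1 / 2)" using \<open>t > 0\<close> e by (intro mult_left_mono) auto
  have "t * (e / 2) * (e / 2) \<le> (1 / 8) * (1 / 2) * (1 / 2)"
    using \<open>t \<le> 1 / 8\<close> \<open>t > 0\<close> e by (intro mult_mono) auto
  then have "t * (t * (e / 2) * (e / 2)) \<le> t * (1 / 32)"
    using \<open>t > 0\<close> by (intro mult_left_mono) auto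
  have "t * a \<ge> - (t * \<bar>a\<bar>)" using mult_left_mono[of "- \<bar>a\<bar>" a t] \<open>t > 0\<close> by simp
  have "t * re_part v \<le> t * M" using re_v \<open>t > 0\<close> by simp
  have "t * \<bar>a\<bar> \<ge> 0" "t * M \<ge> 0" using \<open>t > 0\<close> \<open>M \<ge> 0\<close> by simp_all
  have t': "t * \<bar>a\<bar> + t * M + 2 * t \<le> e\<^sup>2 / 4" using t by (simp add: algebra_simps)
  have "(norm u)\<^sup>2 \<le> (1 + t * (e / 2))\<^sup>2" using u by (simp add: power_mono)
  also have "\<dots> = 1 + 2 * (t * (e / 2)) + t * (t * (e / 2) * (e / 2))"
    by (simp add: power2_eq_square algebra_simps)
  finally have "(norm (u - 1))\<^sup>2 < e\<^sup>2"
    unfolding power2_norm_diff_one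
    using sum t' \<open>t * (e / 2) \<le> t * (1 / 2)\<close> \<open>t * (t * (e / 2) * (e / 2)) \<le> t * (1 / 32)\<close>
      \<open>t * a \<ge> - (t * \<bar>a\<bar>)\<close> \<open>t * re_part v \<le> t * M\<close> \<open>t * \<bar>a\<bar> \<ge> 0\<close> \<open>t * M \<ge> 0\<close> \<open>t > 0\<close>
    by linarith
  then show "norm (u - 1) < e" using e by (simp add: power_less_imp_less_base)
qed

lemma perturbation_size:
  fixes a M e :: real
  assumes e: "0 < e" "e \<le> 1" and "M \<ge> 0"
  obtains t where "t > 0" "t * (\<bar>a\<bar> + M + 2) \<le> e\<^sup>2 / 4" "t * (e / 2) < 1 + t * a"
proof -
  define t where "t = e\<^sup>2 / (4 * (\<bar>a\<bar> + M + 2))"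
  have "\<bar>a\<bar> + M + 2 > 0" using \<open>M \<ge> 0\<close> by linarith
  then have "t > 0" and t: "t * (\<bar>a\<bar> + M + 2) = e\<^sup>2 / 4"
    using e by (simp_all add: t_def field_simps)
  have "t * (e / 2) \<le> t * (1 / 2)" using \<open>t > 0\<close> e by (intro mult_left_mono) auto
  moreover have "t * a \<ge> - (t * \<bar>a\<bar>)" using mult_left_mono[of "- \<bar>a\<bar>" a t] \<open>t > 0\<close> by simp
  moreover have "e\<^sup>2 \<le> 1" using e by (simp add: power_le_one)
  moreover have "t * M \<ge> 0" using \<open>t > 0\<close> \<open>M \<ge> 0\<close> by simp
  moreover have "t * \<bar>a\<bar> + t * M + 2 * t = e\<^sup>2 / 4" using t by (simp add: algebra_simps)
  ultimately have "t * (e / 2) < 1 + t * a" using \<open>t > 0\<close> by linarith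
  with \<open>t > 0\<close> t show ?thesis using that by simp
qed

context gnorm_space
begin

text \<open>Perturb \<open>T\<close> to \<open>T + t S\<close> for small \<open>t\<close> and norm \<open>(T + t S) x\<close> for an almost extremal
  \<open>x\<close>.\<close>

lemma supporting_functional_approx:
  assumes T: "T \<in> Lop sX sY" "gnorm G T = 1" and g: "supporting g T"
    and S: "S \<in> Lop sX sY" and "\<epsilon> > 0"
  obtains x y where "norm x = 1" "y \<in> kdual sY" "onorm y = 1" "norm (G x) > 1 - \<epsilon>"
    "norm (y (T x) - 1) < \<epsilon>" "re_part (g S) - \<epsilon> < re_part (y (S x))"
proof -
  define e where "e = min \<epsilon> 1"
  have e: "0 < e" "e \<le> 1" "e \<le> \<epsilon>" using \<open>\<epsilon> > 0\<close> by (auto simp: e_def)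
  obtain M where "M \<ge> 0" and M: "\<And>x. norm (S x) \<le> M * norm x" using Lop_bound[OF S] by blast
  define a where "a = re_part (g S)"
  obtain t where "t > 0" and t: "t * (\<bar>a\<bar> + M + 2) \<le> e\<^sup>2 / 4" and "t * (e / 2) < 1 + t * a"
    using perturbation_size[OF e(1,2) \<open>M \<ge> 0\<close>] by blast
  define R where "R = (\<lambda>x. T x + sY (of_real t) (S x))"
  have R: "R \<in> Lop sX sY" unfolding R_def by (rule Lop_add[OF sY T(1) Lop_scale[OF sY S]])
  have g_props: "g \<in> op_dual sX sY G" "\<And>S. S \<in> Lop sX sY \<Longrightarrow> norm (g S) \<le> gnorm G S" "g T = 1"
    using g by (auto simp: supporting_def)
  have "g R = 1 + of_real t * g S"
    unfolding R_def using op_dual_add[OF g_props(1) T(1) Lop_scale[OF sY S]]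
      op_dual_scale[OF g_props(1) S] g_props(3) by simp
  then have "1 + t * a \<le> gnorm G R"
    using abs_re_part_le[of "g R"] g_props(2)[OF R] by (simp add: a_def)
  obtain \<delta> where "\<delta> > 0"
    and T_le: "\<And>x. norm x = 1 \<Longrightarrow> norm (G x) > 1 - \<delta> \<Longrightarrow> norm (T x) \<le> 1 + t * (e / 2)"
    using gnorm_upper[OF T(1), of "t * (e / 2)"] \<open>t > 0\<close> e T(2) by auto
  have "t * (e / 2) < gnorm G R" using \<open>t * (e / 2) < 1 + t * a\<close> \<open>1 + t * a \<le> gnorm G R\<close> by linarith
  then obtain x y where x: "norm x = 1" "norm (G x) > 1 - min \<delta> e"
    and y: "y \<in> kdual sY" "onorm y = 1" and Rx: "gnorm G R - t * (e / 2) < re_part (y (R x))"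
    using gnorm_norming_pair[OF R, of "min \<delta> e" "t * (e / 2)"] \<open>\<delta> > 0\<close> \<open>t > 0\<close> e by auto
  have "y (R x) = y (T x) + of_real t * y (S x)"
    by (simp add: R_def kdual_add[OF y(1)] kdual_scale[OF y(1)])
  then have sum: "1 + t * a - t * (e / 2) < re_part (y (T x)) + t * re_part (y (S x))"
    using Rx \<open>1 + t * a \<le> gnorm G R\<close> by simp
  have u: "norm (y (T x)) \<le> 1 + t * (e / 2)"
    using kdual_norm_le[OF sY y(1,2), of "T x"] T_le[OF x(1)] x(2) by force
  have v: "norm (y (S x)) \<le> M"
    using kdual_norm_le[OF sY y(1,2), of "S x"] M[of x] x(1) by simp
  have "norm (y (T x) - 1) < e" "a - e < re_part (y (S x))"
    using near_one_estimate[OF e(1,2) \<open>t > 0\<close> t v u sum] by auto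
  then have "norm (y (T x) - 1) < \<epsilon>" "re_part (g S) - \<epsilon> < re_part (y (S x))"
    using e(3) by (auto simp: a_def)
  moreover have "norm (G x) > 1 - \<epsilon>" using x(2) e by linarith
  ultimately show ?thesis using that x(1) y(1,2) by blast
qed

lemma W_set_re_part_ge:
  assumes T: "T \<in> Lop sX sY" "gnorm G T = 1" and g: "supporting g T" and S: "S \<in> Lop sX sY"
  obtains \<phi> where "\<phi> \<in> W_set sX sY G T" "re_part (g S) \<le> re_part (\<phi> S)"
proof -
  define P where "P \<epsilon> = {p. norm (fst p) = 1 \<and> snd p \<in> kdual sY \<and> onorm (snd p) = 1 \<and>
      norm (G (fst p)) > 1 - \<epsilon> \<and> norm (snd p (T (fst p)) - 1) < \<epsilon> \<and>
      re_part (g S) - \<epsilon> < re_part (snd p (S (fst p)))}" for \<epsilon> :: real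
  have "P \<epsilon> \<noteq> {}" if "\<epsilon> > 0" for \<epsilon>
    by (rule supporting_functional_approx[OF T g S that]) (auto simp: P_def)
  moreover have "P \<epsilon> \<subseteq> P \<epsilon>'" if "0 < \<epsilon>" "\<epsilon> \<le> \<epsilon>'" for \<epsilon> \<epsilon>'
    using that by (auto simp: P_def)
  ultimately obtain F where F: "F \<noteq> bot" and P_ev: "\<And>\<epsilon>. \<epsilon> > 0 \<Longrightarrow> eventually (\<lambda>p. p \<in> P \<epsilon>) F"
    using nested_sets_filter by blast
  have ev: "eventually (\<lambda>p. norm (fst p) = 1 \<and> snd p \<in> kdual sY \<and> onorm (snd p) = 1) F"
    using P_ev[of 1] by (auto simp: P_def elim: eventually_mono)
  have G_lim: "((\<lambda>p. norm (G (fst p))) \<longlongrightarrow> 1) F"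
    unfolding tendsto_iff
  proof (intro allI impI)
    fix \<epsilon> :: real
    assume "\<epsilon> > 0"
    show "eventually (\<lambda>p. dist (norm (G (fst p))) 1 < \<epsilon>) F"
      using P_ev[OF \<open>\<epsilon> > 0\<close>] by (rule eventually_mono) (auto simp: P_def dist_real_def dest: norm_G_le)
  qed
  have T_lim: "((\<lambda>p. snd p (T (fst p))) \<longlongrightarrow> 1) F"
    unfolding tendsto_iff
  proof (intro allI impI)
    fix \<epsilon> :: real
    assume "\<epsilon> > 0"
    show "eventually (\<lambda>p. dist (snd p (T (fst p))) 1 < \<epsilon>) F"
      using P_ev[OF \<open>\<epsilon> > 0\<close>] by (rule eventually_mono) (auto simp: P_def dist_norm)
  qed
  obtain \<phi> U where "\<phi> \<in> W_set sX sY G T" "U \<noteq> bot" "U \<le> F"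
    and lim: "\<And>S. S \<in> Lop sX sY \<Longrightarrow> ((\<lambda>p. snd p (S (fst p))) \<longlongrightarrow> \<phi> S) U"
    using W_set_cluster_point[OF F ev G_lim T_lim] by blast
  have "re_part (g S) \<le> re_part (\<phi> S)"
  proof (rule field_le_epsilon)
    fix \<epsilon> :: real
    assume "\<epsilon> > 0"
    have "eventually (\<lambda>p. re_part (g S) - \<epsilon> \<le> re_part (snd p (S (fst p)))) U"
      using filter_leD[OF \<open>U \<le> F\<close> P_ev[OF \<open>\<epsilon> > 0\<close>]] by (rule eventually_mono) (auto simp: P_def)
    then have "re_part (g S) - \<epsilon> \<le> re_part (\<phi> S)"
      by (rule tendsto_lowerbound[OF bounded_linear.tendsto[OF bounded_linear_re_part lim[OF S]] _ \<open>U \<noteq> bot\<close>])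
    then show "re_part (g S) \<le> re_part (\<phi> S) + \<epsilon>" by simp
  qed
  with \<open>\<phi> \<in> W_set sX sY G T\<close> show ?thesis by (rule that)
qed

end

theorem theorem3p11:
  fixes sX :: "'k::real_normed_field \<Rightarrow> 'a::banach \<Rightarrow> 'a"
    and sY :: "'k \<Rightarrow> 'b::banach \<Rightarrow> 'b"
    and G T :: "'a \<Rightarrow> 'b"
  assumes "kspace sX" and "kspace sY"
    and "G \<in> Lop sX sY" and "onorm G = 1"
    and "norm_on_Lop sX sY (gnorm G)"
    and "T \<in> Lop sX sY" and "gnorm G T = 1"
  shows "smooth_point sX sY G T \<longleftrightarrow> (\<exists>\<phi>. W_set sX sY G T = {\<phi>} \<and> \<phi> T = 1)"
proof -
  interpret gnorm_space sX sY G using assms by unfold_locales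
  have T: "T \<in> Lop sX sY" "gnorm G T = 1" by fact+
  note W_supporting = W_set_supporting[OF T(1)]
  show ?thesis
    unfolding smooth_point_iff_unique_supporting[OF T]
  proof
    assume "\<exists>!f. supporting f T"
    then obtain f where f: "supporting f T" and unique: "\<And>g. supporting g T \<Longrightarrow> g = f" by blast
    obtain \<phi> where "\<phi> \<in> W_set sX sY G T" using W_set_re_part_ge[OF T f T(1)] by blast
    then have "W_set sX sY G T = {f}" using W_supporting unique by blast
    with f show "\<exists>\<phi>. W_set sX sY G T = {\<phi>} \<and> \<phi> T = 1" by (auto simp: supporting_def)
  next
    assume "\<exists>\<phi>. W_set sX sY G T = {\<phi>} \<and> \<phi> T = 1"
    then obtain \<phi> where W: "W_set sX sY G T = {\<phi>}" by blast
    then have \<phi>: "supporting \<phi> T" using W_supporting by blast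
    have "g = \<phi>" if g: "supporting g T" for g
    proof (rule op_dual_eqI)
      show "\<phi> \<in> op_dual sX sY G" "g \<in> op_dual sX sY G"
        using g \<phi> by (simp_all add: supporting_def)
      show "re_part (g S) \<le> re_part (\<phi> S)" if S: "S \<in> Lop sX sY" for S
      proof -
        obtain \<psi> where "\<psi> \<in> W_set sX sY G T" "re_part (g S) \<le> re_part (\<psi> S)"
          using W_set_re_part_ge[OF T g S] by blast
        with W show ?thesis by simp
      qed
    qed
    with \<phi> show "\<exists>!f. supporting f T" by blast
  qed
qed

end
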